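(* Let $G$ be a compact group. (i) $\mathrm{ZM}(G)$ is weak* closed in $\mathrm{M}(G)$, and $\mathrm{ZL}^1(G)$ is weak* dense in $\mathrm{ZM}(G)$. (ii) Let $\tilde m:\mathrm{M}(G\times G)\to\mathrm{M}(G)$ be defined by $\int_G u\,d\tilde m(\mu)=\int_{G\times G}u(st)\,d\mu(s,t)$ for $u\in C(G)$. Then $\tilde m(\mathrm{ZM}(G\times G))=\mathrm{ZM}(G)$ and $\tilde m:\mathrm{ZM}(G\times G)\to\mathrm{ZM}(G)$ is a homomorphism.
   Context: $\mathrm{M}(G)$ is the measure algebra of $G$ with convolution, identified with the dual of $C(G)$ (this gives the weak* topology); $\mathrm{ZM}(G)$ is its centre. $\mathrm{L}^1(G)$ (normalised Haar measure) is regarded as the subalgebra of absolutely continuous measures, and $\mathrm{ZL}^1(G)$ is its centre. *)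

theory Defs
  imports "HOL-Probability.Probability" "HOL-Algebra.Group"
begin

definition compact_group :: "('a, 'b) monoid_scheme \<Rightarrow> 'a topology \<Rightarrow> bool" where
  "compact_group G T \<longleftrightarrow> group G \<and> topspace T = carrier G \<and> compact_space T \<and>
     Hausdorff_space T \<and>
     continuous_map (prod_topology T T) T (\<lambda>p. fst p \<otimes>\<^bsub>G\<^esub> snd p) \<and>
     continuous_map T T (\<lambda>x. inv\<^bsub>G\<^esub> x)"

definition Cfun :: "'a topology \<Rightarrow> ('a \<Rightarrow> complex) set" where
  "Cfun T = {u. continuous_map T euclidean u \<and> (\<forall>x. x \<notin> topspace T \<longrightarrow> u x = 0)}"

definition supnorm :: "'a topology \<Rightarrow> ('a \<Rightarrow> complex) \<Rightarrow> real" where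
  "supnorm T u = Sup ((\<lambda>x. cmod (u x)) ` topspace T)"

text \<open>M(G), identified with the dual of C(G): bounded complex-linear functionals on C(G)
(extended by 0 outside C(G)).  The weak* topology is the topology of pointwise
convergence on C(G), i.e. the (product) topology of the function type restricted to M(G).\<close>
definition Meas :: "'a topology \<Rightarrow> (('a \<Rightarrow> complex) \<Rightarrow> complex) set" where
  "Meas T = {\<phi>.
     (\<forall>u\<in>Cfun T. \<forall>v\<in>Cfun T. \<phi> (\<lambda>x. u x + v x) = \<phi> u + \<phi> v) \<and>
     (\<forall>c. \<forall>u\<in>Cfun T. \<phi> (\<lambda>x. c * u x) = c * \<phi> u) \<and>
     (\<exists>B. \<forall>u\<in>Cfun T. cmod (\<phi> u) \<le> B * supnorm T u) \<and>
     (\<forall>u. u \<notin> Cfun T \<longrightarrow> \<phi> u = 0)}"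

definition conv :: "('a, 'b) monoid_scheme \<Rightarrow> 'a topology \<Rightarrow>
    (('a \<Rightarrow> complex) \<Rightarrow> complex) \<Rightarrow> (('a \<Rightarrow> complex) \<Rightarrow> complex) \<Rightarrow> (('a \<Rightarrow> complex) \<Rightarrow> complex)" where
  "conv G T \<mu> \<nu> = (\<lambda>u. if u \<in> Cfun T then
       \<mu> (\<lambda>s. if s \<in> topspace T then
              \<nu> (\<lambda>t. if t \<in> topspace T then u (s \<otimes>\<^bsub>G\<^esub> t) else 0) else 0)
     else 0)"

definition ZM :: "('a, 'b) monoid_scheme \<Rightarrow> 'a topology \<Rightarrow> (('a \<Rightarrow> complex) \<Rightarrow> complex) set" where
  "ZM G T = {\<mu> \<in> Meas T. \<forall>\<nu>\<in>Meas T. conv G T \<mu> \<nu> = conv G T \<nu> \<mu>}"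

definition borel_of :: "'a topology \<Rightarrow> 'a measure" where
  "borel_of T = sigma (topspace T) {U. openin T U}"

definition haar_measure :: "('a, 'b) monoid_scheme \<Rightarrow> 'a topology \<Rightarrow> 'a measure \<Rightarrow> bool" where
  "haar_measure G T m \<longleftrightarrow>
     space m = topspace T \<and> sets m = sets (borel_of T) \<and> prob_space m \<and>
     (\<forall>x\<in>carrier G. \<forall>A\<in>sets m. emeasure m ((\<lambda>s. x \<otimes>\<^bsub>G\<^esub> s) ` A) = emeasure m A) \<and>
     (\<forall>A\<in>sets m. emeasure m A = (INF U\<in>{U. openin T U \<and> A \<subseteq> U}. emeasure m U)) \<and>
     (\<forall>U. openin T U \<longrightarrow> emeasure m U = (SUP K\<in>{K. compactin T K \<and> K \<subseteq> U}. emeasure m K))"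

text \<open>L^1(G) as the subalgebra of M(G) of measures absolutely continuous w.r.t. the
Haar measure m: the functionals \<open>u \<mapsto> \<integral> u f dm\<close> with f integrable.\<close>
definition L1 :: "'a topology \<Rightarrow> 'a measure \<Rightarrow> (('a \<Rightarrow> complex) \<Rightarrow> complex) set" where
  "L1 T m = {\<phi>. \<exists>f. integrable m f \<and>
       \<phi> = (\<lambda>u. if u \<in> Cfun T then (\<integral>x. u x * f x \<partial>m) else 0)}"

definition ZL1 :: "('a, 'b) monoid_scheme \<Rightarrow> 'a topology \<Rightarrow> 'a measure \<Rightarrow> (('a \<Rightarrow> complex) \<Rightarrow> complex) set" where
  "ZL1 G T m = {\<mu> \<in> L1 T m. \<forall>\<nu>\<in>L1 T m. conv G T \<mu> \<nu> = conv G T \<nu> \<mu>}"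

definition mtilde :: "('a, 'b) monoid_scheme \<Rightarrow> 'a topology \<Rightarrow>
    (('a \<times> 'a \<Rightarrow> complex) \<Rightarrow> complex) \<Rightarrow> (('a \<Rightarrow> complex) \<Rightarrow> complex)" where
  "mtilde G T \<mu> = (\<lambda>u. if u \<in> Cfun T then
      \<mu> (\<lambda>p. if p \<in> topspace (prod_topology T T) then u (fst p \<otimes>\<^bsub>G\<^esub> snd p) else 0)
    else 0)"

end

theory Submission
  imports Defs
begin

text \<open>
  A bounded functional on \<open>C(G)\<close> is central iff it is invariant under conjugation: one
  direction tests commutation against point masses, the other combines conjugation invariance
  with a Fubini theorem for bounded functionals on compact Hausdorff spaces (proved by
  approximating continuous functions on \<open>X \<times> Y\<close> uniformly by sums \<open>\<Sum> g\<^sub>i(x) f\<^sub>i(y)\<close> built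
  from a partition of unity). Conjugation invariance is a family of equations, each weak*
  continuous, so \<open>ZM(G)\<close> is weak* closed.

  For density, a compact group is unimodular, so averaging an Urysohn function over
  conjugation yields central approximate identities: nonnegative class functions of Haar
  integral \<open>1\<close> supported in any given neighbourhood of \<open>1\<close>. Convolving a central \<open>\<mu>\<close> with
  such a density gives an element of \<open>ZL\<^sup>1(G)\<close> whose values on finitely many test functions
  are close to those of \<open>\<mu>\<close>, by uniform continuity of the test functions.

  The map \<open>mtilde\<close> is the push-forward along multiplication, which commutes with conjugation by
  diagonal elements, so it preserves centrality. A central \<open>\<mu>\<close> is the image of its push-forward
  along \<open>s \<mapsto> (s, 1)\<close>, and invariance of a central \<open>\<nu>\<close> on \<open>G \<times> G\<close> under conjugation by
  \<open>(b, 1)\<close> turns \<open>u(a s b t)\<close> into \<open>u(a b s t)\<close>, which is multiplicativity.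
\<close>

lemma continuous_map_to_euclidean_epsilon:
  assumes "\<And>x e. x \<in> topspace X \<Longrightarrow> e > 0 \<Longrightarrow> \<exists>U. openin X U \<and> x \<in> U \<and> (\<forall>y\<in>U. dist (f y) (f x) < e)"
  shows "continuous_map X (euclidean::'b::metric_space topology) f"
  using assms Met_TC.continuous_map_to_metric[of X f] by (simp add: dist_commute)

lemma continuous_map_mult [continuous_intros]:
  fixes f :: "'a \<Rightarrow> 'b::real_normed_algebra"
  shows "\<lbrakk>continuous_map X euclidean f; continuous_map X euclidean g\<rbrakk> \<Longrightarrow> continuous_map X euclidean (\<lambda>x. f x * g x)"
  by (simp add: continuous_map_atin tendsto_mult)

lemma continuous_map_Re [continuous_intros]:
  "continuous_map X euclidean f \<Longrightarrow> continuous_map X euclideanreal (\<lambda>x. Re (f x))"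
  by (simp add: continuous_map_atin tendsto_Re)

lemma continuous_map_of_real [continuous_intros]:
  "continuous_map X euclideanreal f \<Longrightarrow> continuous_map X euclidean (\<lambda>x. complex_of_real (f x))"
  by (simp add: continuous_map_atin tendsto_of_real)

lemma Cfun_continuous_map: "u \<in> Cfun X \<Longrightarrow> continuous_map X euclidean u"
  by (simp add: Cfun_def)

lemma Cfun_outside: "u \<in> Cfun X \<Longrightarrow> x \<notin> topspace X \<Longrightarrow> u x = 0"
  by (simp add: Cfun_def)

lemma Cfun_extend_zero:
  assumes "continuous_map X euclidean f"
  shows "(\<lambda>x. if x \<in> topspace X then f x else 0) \<in> Cfun X"
  unfolding Cfun_def using continuous_map_eq[OF assms, of "\<lambda>x. if x \<in> topspace X then f x else 0"]
  by auto

lemma Cfun_add: "u \<in> Cfun X \<Longrightarrow> v \<in> Cfun X \<Longrightarrow> (\<lambda>x. u x + v x) \<in> Cfun X"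
  and Cfun_diff: "u \<in> Cfun X \<Longrightarrow> v \<in> Cfun X \<Longrightarrow> (\<lambda>x. u x - v x) \<in> Cfun X"
  and Cfun_mult: "u \<in> Cfun X \<Longrightarrow> v \<in> Cfun X \<Longrightarrow> (\<lambda>x. u x * v x) \<in> Cfun X"
  and Cfun_cmult: "u \<in> Cfun X \<Longrightarrow> (\<lambda>x. c * u x) \<in> Cfun X"
  and Cfun_zero: "(\<lambda>x. 0) \<in> Cfun X"
  by (auto simp: Cfun_def intro: continuous_intros)

lemma Cfun_const: "(\<lambda>x. if x \<in> topspace X then c else 0) \<in> Cfun X"
  by (rule Cfun_extend_zero) simp

lemma Cfun_sum: "finite I \<Longrightarrow> (\<And>i. i \<in> I \<Longrightarrow> u i \<in> Cfun X) \<Longrightarrow> (\<lambda>x. \<Sum>i\<in>I. u i x) \<in> Cfun X"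
  by (induction I rule: finite_induct) (auto simp: Cfun_zero intro: Cfun_add)

lemma continuous_map_Cfun_compose:
  "u \<in> Cfun Y \<Longrightarrow> continuous_map X Y h \<Longrightarrow> continuous_map X euclidean (\<lambda>x. u (h x))"
  using continuous_map_compose[of X Y h euclidean u] Cfun_continuous_map by (auto simp: o_def)

lemma Cfun_compose:
  "u \<in> Cfun Y \<Longrightarrow> continuous_map X Y h \<Longrightarrow> (\<lambda>x. if x \<in> topspace X then u (h x) else 0) \<in> Cfun X"
  by (intro Cfun_extend_zero continuous_map_Cfun_compose)

lemma Cfun_slice:
  assumes "continuous_map (prod_topology X Y) euclidean F" "x \<in> topspace X"
  shows "(\<lambda>y. if y \<in> topspace Y then F (x,y) else 0) \<in> Cfun Y"
  using Cfun_extend_zero continuous_map_o_Pair[OF assms] by (simp add: o_def)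

lemma continuous_map_swap:
  assumes "continuous_map (prod_topology X Y) Z F"
  shows "continuous_map (prod_topology Y X) Z (\<lambda>p. F (snd p, fst p))"
proof -
  have "continuous_map (prod_topology Y X) (prod_topology X Y) (\<lambda>p. (snd p, fst p))"
    by (intro continuous_map_pairedI continuous_map_fst continuous_map_snd)
  then show ?thesis using continuous_map_compose[OF _ assms] by (simp add: o_def)
qed

lemma Cfun_bdd_above:
  assumes "compact_space X" "u \<in> Cfun X"
  shows "bdd_above ((\<lambda>x. cmod (u x)) ` topspace X)"
proof -
  have "continuous_map X euclideanreal (\<lambda>x. cmod (u x))"
    using assms by (intro continuous_map_norm Cfun_continuous_map)
  then have "compactin euclideanreal ((\<lambda>x. cmod (u x)) ` topspace X)"
    using assms(1) compact_space_def image_compactin by blast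
  then show ?thesis
    by (simp add: bounded_imp_bdd_above compact_imp_bounded)
qed

lemma supnorm_upper:
  assumes "compact_space X" "u \<in> Cfun X" "x \<in> topspace X"
  shows "cmod (u x) \<le> supnorm X u"
  unfolding supnorm_def using assms Cfun_bdd_above by (intro cSUP_upper) auto

lemma supnorm_least:
  assumes "topspace X \<noteq> {}" "\<And>x. x \<in> topspace X \<Longrightarrow> cmod (u x) \<le> c"
  shows "supnorm X u \<le> c"
  unfolding supnorm_def using assms by (intro cSUP_least) auto

lemma supnorm_nonneg:
  assumes "compact_space X" "u \<in> Cfun X" "topspace X \<noteq> {}"
  shows "0 \<le> supnorm X u"
  using assms supnorm_upper[OF assms(1,2)] by (meson all_not_in_conv norm_ge_zero order_trans)

lemma Meas_add: "\<phi> \<in> Meas X \<Longrightarrow> u \<in> Cfun X \<Longrightarrow> v \<in> Cfun X \<Longrightarrow> \<phi> (\<lambda>x. u x + v x) = \<phi> u + \<phi> v"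
  and Meas_cmult: "\<phi> \<in> Meas X \<Longrightarrow> u \<in> Cfun X \<Longrightarrow> \<phi> (\<lambda>x. c * u x) = c * \<phi> u"
  and Meas_outside: "\<phi> \<in> Meas X \<Longrightarrow> u \<notin> Cfun X \<Longrightarrow> \<phi> u = 0"
  by (simp_all add: Meas_def)

lemma Meas_zero: "\<phi> \<in> Meas X \<Longrightarrow> \<phi> (\<lambda>x. 0) = 0"
  using Meas_cmult[OF _ Cfun_zero, of \<phi> X 0] by simp

lemma Meas_diff:
  assumes "\<phi> \<in> Meas X" "u \<in> Cfun X" "v \<in> Cfun X"
  shows "\<phi> (\<lambda>x. u x - v x) = \<phi> u - \<phi> v"
  using Meas_add[OF assms(1) Cfun_diff[OF assms(2,3)] assms(3)] by simp

lemma Meas_sum: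
  assumes "\<phi> \<in> Meas X"
  shows "finite I \<Longrightarrow> (\<And>i. i \<in> I \<Longrightarrow> u i \<in> Cfun X) \<Longrightarrow> \<phi> (\<lambda>x. \<Sum>i\<in>I. u i x) = (\<Sum>i\<in>I. \<phi> (u i))"
proof (induction I rule: finite_induct)
  case empty then show ?case by (simp add: Meas_zero[OF assms])
next
  case (insert i I)
  then show ?case by (simp add: Meas_add[OF assms] Cfun_sum)
qed

lemma Meas_bound:
  assumes "\<phi> \<in> Meas X" "compact_space X" "topspace X \<noteq> {}"
  obtains B where "B \<ge> 0" "\<And>u. u \<in> Cfun X \<Longrightarrow> cmod (\<phi> u) \<le> B * supnorm X u"
proof -
  obtain B where B: "\<And>u. u \<in> Cfun X \<Longrightarrow> cmod (\<phi> u) \<le> B * supnorm X u"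
    using assms(1) unfolding Meas_def by blast
  show ?thesis
  proof (rule that[of "max B 0"])
    fix u assume u: "u \<in> Cfun X"
    have "B * supnorm X u \<le> max B 0 * supnorm X u"
      using supnorm_nonneg[OF assms(2) u assms(3)] by (simp add: mult_right_mono)
    then show "cmod (\<phi> u) \<le> max B 0 * supnorm X u" using B[OF u] by linarith
  qed simp
qed

lemma Meas_lipschitz:
  assumes "\<phi> \<in> Meas X" "compact_space X" "topspace X \<noteq> {}"
  obtains B where "B \<ge> 0" "\<And>u v e. u \<in> Cfun X \<Longrightarrow> v \<in> Cfun X \<Longrightarrow>
      (\<And>x. x \<in> topspace X \<Longrightarrow> cmod (u x - v x) \<le> e) \<Longrightarrow> cmod (\<phi> u - \<phi> v) \<le> B * e"
proof -
  obtain B where B: "B \<ge> 0" "\<And>u. u \<in> Cfun X \<Longrightarrow> cmod (\<phi> u) \<le> B * supnorm X u"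
    using Meas_bound[OF assms] by blast
  show ?thesis
  proof (rule that[OF B(1)])
    fix u v e assume uv: "u \<in> Cfun X" "v \<in> Cfun X"
      and le: "\<And>x. x \<in> topspace X \<Longrightarrow> cmod (u x - v x) \<le> e"
    have "cmod (\<phi> u - \<phi> v) = cmod (\<phi> (\<lambda>x. u x - v x))" using Meas_diff[OF assms(1) uv] by simp
    also have "\<dots> \<le> B * supnorm X (\<lambda>x. u x - v x)" using B(2) Cfun_diff[OF uv] by blast
    also have "\<dots> \<le> B * e" using supnorm_least[OF assms(3) le] B(1) by (simp add: mult_left_mono)
    finally show "cmod (\<phi> u - \<phi> v) \<le> B * e" .
  qed
qed

definition dirac :: "'a topology \<Rightarrow> 'a \<Rightarrow> (('a \<Rightarrow> complex) \<Rightarrow> complex)" where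
  "dirac X a = (\<lambda>u. if u \<in> Cfun X then u a else 0)"

lemma dirac_Meas:
  assumes "compact_space X" "a \<in> topspace X"
  shows "dirac X a \<in> Meas X"
  unfolding Meas_def dirac_def
proof (intro CollectI conjI ballI allI impI)
  show "\<exists>B. \<forall>u\<in>Cfun X. cmod (if u \<in> Cfun X then u a else 0) \<le> B * supnorm X u"
    by (rule exI[of _ 1]) (simp add: supnorm_upper assms)
qed (auto simp: Cfun_add Cfun_cmult)

definition pushforward :: "'a topology \<Rightarrow> 'b topology \<Rightarrow> ('a \<Rightarrow> 'b) \<Rightarrow>
    (('a \<Rightarrow> complex) \<Rightarrow> complex) \<Rightarrow> (('b \<Rightarrow> complex) \<Rightarrow> complex)" where
  "pushforward X Y h \<phi> = (\<lambda>u. if u \<in> Cfun Y then \<phi> (\<lambda>x. if x \<in> topspace X then u (h x) else 0) else 0)"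

lemma pushforward_apply:
  "u \<in> Cfun Y \<Longrightarrow> pushforward X Y h \<phi> u = \<phi> (\<lambda>x. if x \<in> topspace X then u (h x) else 0)"
  by (simp add: pushforward_def)

lemma Meas_pushforward:
  assumes \<phi>: "\<phi> \<in> Meas X" and X: "compact_space X" "topspace X \<noteq> {}"
    and Y: "compact_space Y" and h: "continuous_map X Y h"
  shows "pushforward X Y h \<phi> \<in> Meas Y"
proof -
  obtain B where B: "B \<ge> 0" "\<And>u. u \<in> Cfun X \<Longrightarrow> cmod (\<phi> u) \<le> B * supnorm X u"
    using Meas_bound[OF \<phi> X] by blast
  have hC: "(\<lambda>x. if x \<in> topspace X then u (h x) else 0) \<in> Cfun X" if "u \<in> Cfun Y" for u
    using that h by (rule Cfun_compose)
  have sum_eq: "(\<lambda>x. if x \<in> topspace X then u (h x) + v (h x) else 0)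
      = (\<lambda>x. (if x \<in> topspace X then u (h x) else 0) + (if x \<in> topspace X then v (h x) else 0))"
    for u v :: "'b \<Rightarrow> complex"
    by auto
  have cmult_eq: "(\<lambda>x. if x \<in> topspace X then c * u (h x) else 0)
      = (\<lambda>x. c * (if x \<in> topspace X then u (h x) else 0))"
    for u :: "'b \<Rightarrow> complex" and c
    by auto
  show ?thesis
    unfolding Meas_def
  proof (intro CollectI conjI ballI allI impI exI)
    fix u v assume "u \<in> Cfun Y" "v \<in> Cfun Y"
    then show "pushforward X Y h \<phi> (\<lambda>x. u x + v x) = pushforward X Y h \<phi> u + pushforward X Y h \<phi> v"
      by (simp add: pushforward_apply Cfun_add sum_eq hC Meas_add[OF \<phi>])
  next
    fix c u assume "u \<in> Cfun Y"
    then show "pushforward X Y h \<phi> (\<lambda>x. c * u x) = c * pushforward X Y h \<phi> u"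
      by (simp add: pushforward_apply Cfun_cmult cmult_eq hC Meas_cmult[OF \<phi>])
  next
    fix u assume u: "u \<in> Cfun Y"
    have "cmod (pushforward X Y h \<phi> u) \<le> B * supnorm X (\<lambda>x. if x \<in> topspace X then u (h x) else 0)"
      using B(2)[OF hC[OF u]] u by (simp add: pushforward_apply)
    also have "\<dots> \<le> B * supnorm Y u"
      using h supnorm_upper[OF Y u] B(1)
      by (intro mult_left_mono supnorm_least[OF X(2)]) (auto simp: continuous_map_def)
    finally show "cmod (pushforward X Y h \<phi> u) \<le> B * supnorm Y u" .
  qed (simp add: pushforward_def)
qed

lemma pushforward_compose:
  assumes h: "continuous_map X Y h" and k: "continuous_map Y Z k"
  shows "pushforward Y Z k (pushforward X Y h \<phi>) = pushforward X Z (\<lambda>x. k (h x)) \<phi>"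
proof
  fix u show "pushforward Y Z k (pushforward X Y h \<phi>) u = pushforward X Z (\<lambda>x. k (h x)) \<phi> u"
  proof (cases "u \<in> Cfun Z")
    case True
    have "(\<lambda>x. if x \<in> topspace X then if h x \<in> topspace Y then u (k (h x)) else 0 else 0)
        = (\<lambda>x. if x \<in> topspace X then u (k (h x)) else 0)"
      using continuous_map_image_subset_topspace[OF h] by (intro ext) auto
    then show ?thesis using True Cfun_compose[OF True k] by (simp add: pushforward_apply)
  qed (simp add: pushforward_def)
qed

lemma pushforward_cong:
  "(\<And>x. x \<in> topspace X \<Longrightarrow> h x = h' x) \<Longrightarrow> pushforward X Y h \<phi> = pushforward X Y h' \<phi>"
  by (simp add: pushforward_def cong: if_cong)

lemma pushforward_identity:
  assumes "\<phi> \<in> Meas X" "\<And>x. x \<in> topspace X \<Longrightarrow> h x = x"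
  shows "pushforward X X h \<phi> = \<phi>"
proof
  fix u show "pushforward X X h \<phi> u = \<phi> u"
  proof (cases "u \<in> Cfun X")
    case True
    then have "(\<lambda>x. if x \<in> topspace X then u (h x) else 0) = u"
      using assms(2) by (auto simp: Cfun_outside)
    then show ?thesis using True by (simp add: pushforward_apply)
  qed (simp add: pushforward_def Meas_outside[OF assms(1)])
qed

section \<open>A Fubini theorem for bounded functionals\<close>

lemma compact_Hausdorff_Urysohn_point:
  assumes "compact_space X" "Hausdorff_space X" "openin X U" "x \<in> U"
  shows "\<exists>h. continuous_map X euclideanreal h \<and> (\<forall>y\<in>topspace X. 0 \<le> h y \<and> h y \<le> 1) \<and>
      h x = 1 \<and> (\<forall>y\<in>topspace X. y \<notin> U \<longrightarrow> h y = 0)"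
proof -
  have "normal_space X"
    using assms by (simp add: compact_Hausdorff_or_regular_imp_normal_space)
  moreover have "closedin X {x}"
    using assms Hausdorff_imp_t1_space openin_subset t1_space_closedin_singleton by fastforce
  moreover have "closedin X (topspace X - U)" "disjnt (topspace X - U) {x}"
    using assms by auto
  ultimately obtain h where h: "continuous_map X (top_of_set {0..1::real}) h"
      "h ` (topspace X - U) \<subseteq> {0}" "h ` {x} \<subseteq> {1}"
    using Urysohn_lemma[of X "topspace X - U" "{x}" 0 1] by auto
  moreover have "continuous_map X euclideanreal h"
    using h(1) continuous_map_in_subtopology by blast
  moreover have "\<forall>y\<in>topspace X. 0 \<le> h y \<and> h y \<le> 1"
    using h(1) by (auto simp: continuous_map_def)
  ultimately show ?thesis by blast
qed

lemma compact_space_point_cover: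
  assumes "compact_space X" "\<And>x. x \<in> topspace X \<Longrightarrow> openin X (W x) \<and> x \<in> W x"
  obtains D where "finite D" "D \<subseteq> topspace X" "topspace X \<subseteq> (\<Union>x\<in>D. W x)"
proof -
  obtain \<F> where "finite \<F>" "\<F> \<subseteq> W ` topspace X" "topspace X \<subseteq> \<Union>\<F>"
    using compactinD[of X "topspace X" "W ` topspace X"] assms by (auto simp: compact_space_def)
  then show ?thesis by (metis that finite_subset_image)
qed

lemma compact_Hausdorff_partition_of_unity:
  assumes X: "compact_space X" "Hausdorff_space X"
    and U: "\<And>x. x \<in> topspace X \<Longrightarrow> openin X (U x) \<and> x \<in> U x"
  obtains D and g :: "'a \<Rightarrow> 'a \<Rightarrow> real"
  where "finite D" "D \<subseteq> topspace X"
    "\<And>i. i \<in> D \<Longrightarrow> continuous_map X euclideanreal (g i)"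
    "\<And>i x. i \<in> D \<Longrightarrow> x \<in> topspace X \<Longrightarrow> 0 \<le> g i x"
    "\<And>x. x \<in> topspace X \<Longrightarrow> (\<Sum>i\<in>D. g i x) = 1"
    "\<And>i x. i \<in> D \<Longrightarrow> x \<in> topspace X \<Longrightarrow> g i x \<noteq> 0 \<Longrightarrow> x \<in> U i"
proof -
  have "\<forall>x\<in>topspace X. \<exists>h. continuous_map X euclideanreal h \<and> (\<forall>y\<in>topspace X. 0 \<le> h y \<and> h y \<le> 1) \<and>
      h x = 1 \<and> (\<forall>y\<in>topspace X. y \<notin> U x \<longrightarrow> h y = 0)"
    using compact_Hausdorff_Urysohn_point[OF X] U by blast
  then obtain h where h: "\<And>x. x \<in> topspace X \<Longrightarrow> continuous_map X euclideanreal (h x) \<and>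
      (\<forall>y\<in>topspace X. 0 \<le> h x y \<and> h x y \<le> 1) \<and> h x x = 1 \<and> (\<forall>y\<in>topspace X. y \<notin> U x \<longrightarrow> h x y = 0)"
    by metis
  define W where "W x = {y \<in> topspace X. h x y \<in> {1/2<..}}" for x
  have "openin X (W x) \<and> x \<in> W x" if "x \<in> topspace X" for x
    unfolding W_def using openin_continuous_map_preimage[of X _ "h x" "{1/2<..}"] h[OF that] that by auto
  then obtain D where D: "finite D" "D \<subseteq> topspace X" "topspace X \<subseteq> (\<Union>x\<in>D. W x)"
    using compact_space_point_cover[OF X(1)] by metis
  define s where "s y = (\<Sum>i\<in>D. h i y)" for y
  have s_ge: "s y \<ge> 1/2" if y: "y \<in> topspace X" for y
  proof -
    obtain i where i: "i \<in> D" "y \<in> W i" using D y by blast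
    have "h i y \<le> s y" unfolding s_def
      using D i h y by (intro member_le_sum) auto
    then show ?thesis using i W_def by auto
  qed
  show ?thesis
  proof (rule that[OF D(1,2), of "\<lambda>i y. h i y / s y"])
    fix i assume i: "i \<in> D"
    show "continuous_map X euclideanreal (\<lambda>y. h i y / s y)"
      unfolding s_def using D i s_ge h
      by (intro continuous_map_real_divide continuous_map_sum) (auto simp: s_def, fastforce)
    fix y assume y: "y \<in> topspace X"
    show "0 \<le> h i y / s y" using h[of i] i D(2) y s_ge[OF y] by auto
    show "h i y / s y \<noteq> 0 \<Longrightarrow> y \<in> U i" using h[of i] i D(2) y by auto
  next
    fix y assume "y \<in> topspace X"
    then have "s y \<noteq> 0" using s_ge by fastforce
    then show "(\<Sum>i\<in>D. h i y / s y) = 1"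
      by (simp add: s_def flip: sum_divide_distrib)
  qed
qed


lemma compact_tube_uniformly_close:
  fixes F :: "'x \<times> 'y \<Rightarrow> 'c::real_normed_vector"
  assumes "compact_space Y" "continuous_map (prod_topology X Y) euclidean F"
    "x0 \<in> topspace X" "e > 0"
  obtains U where "openin X U" "x0 \<in> U"
    "\<And>x y. x \<in> U \<Longrightarrow> y \<in> topspace Y \<Longrightarrow> norm (F (x,y) - F (x0,y)) < e"
proof -
  define H where "H = (\<lambda>p. F p - F (x0, snd p))"
  have "continuous_map (prod_topology X Y) (prod_topology X Y) (\<lambda>p. (x0, snd p))"
    using assms(3) by (intro continuous_map_pairedI) (auto intro: continuous_map_snd)
  then have "continuous_map (prod_topology X Y) euclidean H"
    unfolding H_def using continuous_map_compose[OF _ assms(2)]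
    by (intro continuous_map_diff assms(2)) (simp add: o_def)
  then have W: "openin (prod_topology X Y) {p \<in> topspace (prod_topology X Y). H p \<in> ball 0 e}"
    by (rule openin_continuous_map_preimage) simp
  have sub: "{x0} \<times> topspace Y \<subseteq> {p \<in> topspace (prod_topology X Y). H p \<in> ball 0 e}"
    using assms(3,4) by (auto simp: H_def)
  have "compactin Y (topspace Y)" using assms(1) by (simp add: compact_space_def)
  then obtain U V where UV: "openin X U" "x0 \<in> U" "topspace Y \<subseteq> V"
      "U \<times> V \<subseteq> {p \<in> topspace (prod_topology X Y). H p \<in> ball 0 e}"
    using tube_lemma_right[OF W _ assms(3) sub] by blast
  show ?thesis
  proof (rule that[OF UV(1,2)])
    fix x y assume "x \<in> U" "y \<in> topspace Y"
    then have "(x,y) \<in> {p \<in> topspace (prod_topology X Y). H p \<in> ball 0 e}" using UV(3,4) by blast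
    then show "norm (F (x,y) - F (x0,y)) < e" by (simp add: H_def dist_norm norm_minus_commute)
  qed
qed

lemma Cfun_parametric:
  fixes F :: "'x \<times> 'y \<Rightarrow> complex"
  assumes Y: "compact_space Y" "topspace Y \<noteq> {}"
    and F: "continuous_map (prod_topology X Y) euclidean F" and \<nu>: "\<nu> \<in> Meas Y"
  shows "(\<lambda>x. if x \<in> topspace X then \<nu> (\<lambda>y. if y \<in> topspace Y then F (x,y) else 0) else 0) \<in> Cfun X"
proof (rule Cfun_extend_zero, rule continuous_map_to_euclidean_epsilon)
  obtain B where B: "B \<ge> 0" "\<And>u v e. u \<in> Cfun Y \<Longrightarrow> v \<in> Cfun Y \<Longrightarrow>
      (\<And>x. x \<in> topspace Y \<Longrightarrow> cmod (u x - v x) \<le> e) \<Longrightarrow> cmod (\<nu> u - \<nu> v) \<le> B * e"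
    using Meas_lipschitz[OF \<nu> Y] by blast
  fix x0 and e :: real assume x0: "x0 \<in> topspace X" and e: "e > 0"
  define d where "d = e / (B + 1)"
  have d: "d > 0" "B * d < e" using B(1) e by (auto simp: d_def field_simps)
  obtain U where U: "openin X U" "x0 \<in> U"
      "\<And>x y. x \<in> U \<Longrightarrow> y \<in> topspace Y \<Longrightarrow> norm (F (x,y) - F (x0,y)) < d"
    using compact_tube_uniformly_close[OF Y(1) F x0 d(1)] by blast
  have "dist (\<nu> (\<lambda>y. if y \<in> topspace Y then F (x,y) else 0)) (\<nu> (\<lambda>y. if y \<in> topspace Y then F (x0,y) else 0)) < e"
    if x: "x \<in> U" for x
  proof -
    have "x \<in> topspace X" using U(1) x openin_subset by blast
    then have "cmod (\<nu> (\<lambda>y. if y \<in> topspace Y then F (x,y) else 0) - \<nu> (\<lambda>y. if y \<in> topspace Y then F (x0,y) else 0)) \<le> B * d"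
      using U(3)[OF x] by (intro B(2) Cfun_slice[OF F] x0) (auto intro: less_imp_le)
    then show ?thesis using d by (simp add: dist_norm)
  qed
  then show "\<exists>U. openin X U \<and> x0 \<in> U \<and> (\<forall>x\<in>U.
      dist (\<nu> (\<lambda>y. if y \<in> topspace Y then F (x,y) else 0)) (\<nu> (\<lambda>y. if y \<in> topspace Y then F (x0,y) else 0)) < e)"
    using U by blast
qed

definition iterated_integral :: "'x topology \<Rightarrow> 'y topology \<Rightarrow> (('x \<Rightarrow> complex) \<Rightarrow> complex) \<Rightarrow>
    (('y \<Rightarrow> complex) \<Rightarrow> complex) \<Rightarrow> ('x \<times> 'y \<Rightarrow> complex) \<Rightarrow> complex" where
  "iterated_integral X Y \<mu> \<nu> F =
     \<mu> (\<lambda>x. if x \<in> topspace X then \<nu> (\<lambda>y. if y \<in> topspace Y then F (x,y) else 0) else 0)"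

lemma iterated_integral_lipschitz:
  assumes X: "compact_space X" "topspace X \<noteq> {}" and Y: "compact_space Y" "topspace Y \<noteq> {}"
    and \<mu>: "\<mu> \<in> Meas X" and \<nu>: "\<nu> \<in> Meas Y"
  obtains B where "B \<ge> 0" "\<And>F F' e. continuous_map (prod_topology X Y) euclidean F \<Longrightarrow>
      continuous_map (prod_topology X Y) euclidean F' \<Longrightarrow>
      (\<And>x y. x \<in> topspace X \<Longrightarrow> y \<in> topspace Y \<Longrightarrow> cmod (F (x,y) - F' (x,y)) \<le> e) \<Longrightarrow>
      cmod (iterated_integral X Y \<mu> \<nu> F - iterated_integral X Y \<mu> \<nu> F') \<le> B * e"
proof -
  obtain B1 where B1: "B1 \<ge> 0" "\<And>u v e. u \<in> Cfun X \<Longrightarrow> v \<in> Cfun X \<Longrightarrow>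
      (\<And>x. x \<in> topspace X \<Longrightarrow> cmod (u x - v x) \<le> e) \<Longrightarrow> cmod (\<mu> u - \<mu> v) \<le> B1 * e"
    using Meas_lipschitz[OF \<mu> X] by blast
  obtain B2 where B2: "B2 \<ge> 0" "\<And>u v e. u \<in> Cfun Y \<Longrightarrow> v \<in> Cfun Y \<Longrightarrow>
      (\<And>y. y \<in> topspace Y \<Longrightarrow> cmod (u y - v y) \<le> e) \<Longrightarrow> cmod (\<nu> u - \<nu> v) \<le> B2 * e"
    using Meas_lipschitz[OF \<nu> Y] by blast
  show ?thesis
  proof (rule that[of "B1 * B2"])
    fix F F' e
    assume F: "continuous_map (prod_topology X Y) euclidean F"
      and F': "continuous_map (prod_topology X Y) euclidean F'"
      and le: "\<And>x y. x \<in> topspace X \<Longrightarrow> y \<in> topspace Y \<Longrightarrow> cmod (F (x,y) - F' (x,y)) \<le> e"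
    have "cmod (\<nu> (\<lambda>y. if y \<in> topspace Y then F (x,y) else 0) - \<nu> (\<lambda>y. if y \<in> topspace Y then F' (x,y) else 0))
        \<le> B2 * e" if "x \<in> topspace X" for x
      using le that by (intro B2(2) Cfun_slice[OF F] Cfun_slice[OF F']) auto
    then have "cmod (iterated_integral X Y \<mu> \<nu> F - iterated_integral X Y \<mu> \<nu> F') \<le> B1 * (B2 * e)"
      unfolding iterated_integral_def
      by (intro B1(2) Cfun_parametric[OF Y F \<nu>] Cfun_parametric[OF Y F' \<nu>]) auto
    then show "cmod (iterated_integral X Y \<mu> \<nu> F - iterated_integral X Y \<mu> \<nu> F') \<le> B1 * B2 * e"
      by (simp add: mult.assoc)
  qed (use B1 B2 in simp)
qed

lemma Meas_linear_combination:
  assumes "\<phi> \<in> Meas X" "finite D" "\<And>i. i \<in> D \<Longrightarrow> u i \<in> Cfun X"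
  shows "\<phi> (\<lambda>x. \<Sum>i\<in>D. c i * u i x) = (\<Sum>i\<in>D. c i * \<phi> (u i))"
  using Meas_sum[OF assms(1,2), of "\<lambda>i x. c i * u i x"] assms(3)
  by (simp add: Meas_cmult[OF assms(1)] Cfun_cmult)

lemma iterated_integral_separated:
  assumes \<mu>: "\<mu> \<in> Meas X" and \<nu>: "\<nu> \<in> Meas Y" and D: "finite D"
    and g: "\<And>i. i \<in> D \<Longrightarrow> g i \<in> Cfun X" and f: "\<And>i. i \<in> D \<Longrightarrow> f i \<in> Cfun Y"
  shows "iterated_integral X Y \<mu> \<nu> (\<lambda>p. \<Sum>i\<in>D. g i (fst p) * f i (snd p)) = (\<Sum>i\<in>D. \<mu> (g i) * \<nu> (f i))"
proof -
  have "(\<lambda>x. if x \<in> topspace X then \<nu> (\<lambda>y. if y \<in> topspace Y then \<Sum>i\<in>D. g i x * f i y else 0) else 0)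
      = (\<lambda>x. \<Sum>i\<in>D. \<nu> (f i) * g i x)"
  proof
    fix x
    have "(\<lambda>y. if y \<in> topspace Y then \<Sum>i\<in>D. g i x * f i y else 0) = (\<lambda>y. \<Sum>i\<in>D. g i x * f i y)"
      by (intro ext) (simp add: Cfun_outside[OF f] cong: sum.cong)
    moreover have "\<nu> (\<lambda>y. \<Sum>i\<in>D. g i x * f i y) = (\<Sum>i\<in>D. g i x * \<nu> (f i))"
      by (rule Meas_linear_combination[where u = f, OF \<nu> D f])
    ultimately show "(if x \<in> topspace X then \<nu> (\<lambda>y. if y \<in> topspace Y then \<Sum>i\<in>D. g i x * f i y else 0) else 0)
        = (\<Sum>i\<in>D. \<nu> (f i) * g i x)"
      by (simp add: Cfun_outside[OF g] mult.commute cong: sum.cong)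
  qed
  then have "iterated_integral X Y \<mu> \<nu> (\<lambda>p. \<Sum>i\<in>D. g i (fst p) * f i (snd p)) = \<mu> (\<lambda>x. \<Sum>i\<in>D. \<nu> (f i) * g i x)"
    unfolding iterated_integral_def prod.sel by (rule arg_cong[where f = \<mu>])
  also have "\<dots> = (\<Sum>i\<in>D. \<nu> (f i) * \<mu> (g i))"
    by (rule Meas_linear_combination[where u = g, OF \<mu> D g])
  finally show ?thesis by (simp add: mult.commute)
qed

lemma continuous_map_prod_separated_approx:
  fixes F :: "'x \<times> 'y \<Rightarrow> complex"
  assumes X: "compact_space X" "Hausdorff_space X" and Y: "compact_space Y"
    and F: "continuous_map (prod_topology X Y) euclidean F" and e: "e > 0"
  obtains D g where "finite D" "D \<subseteq> topspace X" "\<And>i. i \<in> D \<Longrightarrow> g i \<in> Cfun X"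
    "\<And>x y. x \<in> topspace X \<Longrightarrow> y \<in> topspace Y \<Longrightarrow> cmod (F (x,y) - (\<Sum>i\<in>D. g i x * F (i,y))) \<le> e"
proof -
  have "\<forall>x\<in>topspace X. \<exists>U. openin X U \<and> x \<in> U \<and> (\<forall>x'\<in>U. \<forall>y\<in>topspace Y. cmod (F (x',y) - F (x,y)) < e)"
    using compact_tube_uniformly_close[OF Y F _ e] by metis
  then obtain U where U: "\<And>x. x \<in> topspace X \<Longrightarrow> openin X (U x) \<and> x \<in> U x \<and>
      (\<forall>x'\<in>U x. \<forall>y\<in>topspace Y. cmod (F (x',y) - F (x,y)) < e)"
    by metis
  obtain D p where D: "finite D" "D \<subseteq> topspace X"
    and p: "\<And>i. i \<in> D \<Longrightarrow> continuous_map X euclideanreal (p i)"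
      "\<And>i x. i \<in> D \<Longrightarrow> x \<in> topspace X \<Longrightarrow> 0 \<le> p i x"
      "\<And>x. x \<in> topspace X \<Longrightarrow> (\<Sum>i\<in>D. p i x) = 1"
      "\<And>i x. i \<in> D \<Longrightarrow> x \<in> topspace X \<Longrightarrow> p i x \<noteq> 0 \<Longrightarrow> x \<in> U i"
    using compact_Hausdorff_partition_of_unity[OF X, of U] U by metis
  show ?thesis
  proof (rule that[OF D, of "\<lambda>i x. if x \<in> topspace X then of_real (p i x) else 0"])
    show "(\<lambda>x. if x \<in> topspace X then complex_of_real (p i x) else 0) \<in> Cfun X" if "i \<in> D" for i
      by (intro Cfun_extend_zero continuous_map_of_real p that)
    fix x y assume x: "x \<in> topspace X" and y: "y \<in> topspace Y"
    have "F (x,y) = (\<Sum>i\<in>D. of_real (p i x) * F (x,y))"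
      by (simp add: p(3)[OF x] flip: sum_distrib_right of_real_sum)
    then have "F (x,y) - (\<Sum>i\<in>D. of_real (p i x) * F (i,y)) = (\<Sum>i\<in>D. of_real (p i x) * (F (x,y) - F (i,y)))"
      by (simp add: algebra_simps sum_subtractf)
    also have "cmod \<dots> \<le> (\<Sum>i\<in>D. p i x * e)"
    proof (rule order_trans[OF norm_sum sum_mono])
      fix i assume i: "i \<in> D"
      show "cmod (of_real (p i x) * (F (x,y) - F (i,y))) \<le> p i x * e"
      proof (cases "p i x = 0")
        case False
        then have "cmod (F (x,y) - F (i,y)) \<le> e"
          using U[of i] p(4)[OF i x] i D(2) y by (auto intro: less_imp_le)
        then show ?thesis using p(2)[OF i x] by (simp add: norm_mult mult_left_mono)
      qed simp
    qed
    also have "\<dots> = e" using p(3)[OF x] by (simp flip: sum_distrib_right)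
    finally show "cmod (F (x,y) - (\<Sum>i\<in>D. (if x \<in> topspace X then complex_of_real (p i x) else 0) * F (i,y))) \<le> e"
      using x by simp
  qed
qed

lemma iterated_integral_swap_separated:
  assumes \<mu>: "\<mu> \<in> Meas X" and \<nu>: "\<nu> \<in> Meas Y" and D: "finite D"
    and g: "\<And>i. i \<in> D \<Longrightarrow> g i \<in> Cfun X" and f: "\<And>i. i \<in> D \<Longrightarrow> f i \<in> Cfun Y"
  shows "iterated_integral X Y \<mu> \<nu> (\<lambda>p. \<Sum>i\<in>D. g i (fst p) * f i (snd p))
       = iterated_integral Y X \<nu> \<mu> (\<lambda>p. \<Sum>i\<in>D. g i (snd p) * f i (fst p))"
proof -
  have "iterated_integral X Y \<mu> \<nu> (\<lambda>p. \<Sum>i\<in>D. g i (fst p) * f i (snd p)) = (\<Sum>i\<in>D. \<mu> (g i) * \<nu> (f i))"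
    by (rule iterated_integral_separated[where g = g and f = f, OF \<mu> \<nu> D g f])
  also have "\<dots> = (\<Sum>i\<in>D. \<nu> (f i) * \<mu> (g i))" by (simp add: mult.commute)
  also have "\<dots> = iterated_integral Y X \<nu> \<mu> (\<lambda>p. \<Sum>i\<in>D. f i (fst p) * g i (snd p))"
    by (rule iterated_integral_separated[where g = f and f = g, OF \<nu> \<mu> D f g, symmetric])
  also have "(\<lambda>p. \<Sum>i\<in>D. f i (fst p) * g i (snd p)) = (\<lambda>p. \<Sum>i\<in>D. g i (snd p) * f i (fst p))"
    by (simp add: mult.commute)
  finally show ?thesis .
qed

lemma eq_if_norm_diff_le_epsilon:
  fixes a b :: "'a::real_normed_vector"
  assumes "C \<ge> 0" "\<And>e. e > 0 \<Longrightarrow> norm (a - b) \<le> C * e"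
  shows "a = b"
proof -
  have "norm (a - b) \<le> d" if d: "d > 0" for d
  proof -
    have "norm (a - b) \<le> C * (d / (C + 1))" by (rule assms(2)) (use d assms(1) in simp)
    also have "\<dots> \<le> d" using d assms(1) by (simp add: field_simps)
    finally show ?thesis .
  qed
  then show ?thesis using field_le_epsilon[of "norm (a - b)" 0] by simp
qed

theorem iterated_integral_swap:
  fixes F :: "'x \<times> 'y \<Rightarrow> complex"
  assumes X: "compact_space X" "Hausdorff_space X" "topspace X \<noteq> {}"
      and Y: "compact_space Y" "topspace Y \<noteq> {}"
      and F: "continuous_map (prod_topology X Y) euclidean F"
      and \<mu>: "\<mu> \<in> Meas X" and \<nu>: "\<nu> \<in> Meas Y"
  shows "iterated_integral X Y \<mu> \<nu> F = iterated_integral Y X \<nu> \<mu> (\<lambda>p. F (snd p, fst p))"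
proof -
  let ?L = "iterated_integral X Y \<mu> \<nu>" and ?R = "\<lambda>F. iterated_integral Y X \<nu> \<mu> (\<lambda>p. F (snd p, fst p))"
  obtain B1 where B1: "B1 \<ge> 0" "\<And>F F' e. continuous_map (prod_topology X Y) euclidean F \<Longrightarrow>
      continuous_map (prod_topology X Y) euclidean F' \<Longrightarrow>
      (\<And>x y. x \<in> topspace X \<Longrightarrow> y \<in> topspace Y \<Longrightarrow> cmod (F (x,y) - F' (x,y)) \<le> e) \<Longrightarrow>
      cmod (?L F - ?L F') \<le> B1 * e"
    using iterated_integral_lipschitz[OF X(1,3) Y \<mu> \<nu>] by blast
  obtain B2 where B2: "B2 \<ge> 0" "\<And>F F' e. continuous_map (prod_topology Y X) euclidean F \<Longrightarrow>
      continuous_map (prod_topology Y X) euclidean F' \<Longrightarrow>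
      (\<And>y x. y \<in> topspace Y \<Longrightarrow> x \<in> topspace X \<Longrightarrow> cmod (F (y,x) - F' (y,x)) \<le> e) \<Longrightarrow>
      cmod (iterated_integral Y X \<nu> \<mu> F - iterated_integral Y X \<nu> \<mu> F') \<le> B2 * e"
    using iterated_integral_lipschitz[OF Y X(1,3) \<nu> \<mu>] by blast
  show ?thesis
  proof (rule eq_if_norm_diff_le_epsilon[of "B1 + B2"])
    fix e :: real assume e: "e > 0"
    obtain D g where D: "finite D" "D \<subseteq> topspace X" and g: "\<And>i. i \<in> D \<Longrightarrow> g i \<in> Cfun X"
      and approx: "\<And>x y. x \<in> topspace X \<Longrightarrow> y \<in> topspace Y \<Longrightarrow> cmod (F (x,y) - (\<Sum>i\<in>D. g i x * F (i,y))) \<le> e"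
      using continuous_map_prod_separated_approx[OF X(1,2) Y(1) F e] by blast
    define f where "f i = (\<lambda>y. if y \<in> topspace Y then F (i,y) else 0)" for i
    have f: "f i \<in> Cfun Y" if "i \<in> D" for i
      unfolding f_def using Cfun_slice[OF F] that D(2) by blast
    define S where "S p = (\<Sum>i\<in>D. g i (fst p) * f i (snd p))" for p
    have S: "continuous_map (prod_topology X Y) euclidean S"
      unfolding S_def
      by (intro continuous_map_sum D(1) continuous_map_mult
          continuous_map_Cfun_compose[OF g continuous_map_fst] continuous_map_Cfun_compose[OF f continuous_map_snd])
    have close: "cmod (F (x,y) - S (x,y)) \<le> e" if "x \<in> topspace X" "y \<in> topspace Y" for x y
      using approx[OF that] that by (simp add: S_def f_def)
    have "?L S = ?R S"
      unfolding S_def prod.sel by (rule iterated_integral_swap_separated[where g = g and f = f, OF \<mu> \<nu> D(1) g f])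
    then have "cmod (?L F - ?R F) \<le> cmod (?L F - ?L S) + cmod (?R F - ?R S)"
      using norm_triangle_ineq[of "?L F - ?L S" "?R S - ?R F"] by (simp add: norm_minus_commute)
    also have "\<dots> \<le> B1 * e + B2 * e"
      using B1(2)[OF F S close]
        B2(2)[OF continuous_map_swap[OF F] continuous_map_swap[OF S], unfolded prod.sel, OF close]
      by linarith
    finally show "cmod (?L F - ?R F) \<le> (B1 + B2) * e" by (simp add: algebra_simps)
  qed (use B1 B2 in simp)
qed

lemma closure_fun_finite_approx:
  fixes \<mu> :: "'i \<Rightarrow> 'b::metric_space"
  assumes approx: "\<And>J \<epsilon>. finite J \<Longrightarrow> \<epsilon> > 0 \<Longrightarrow> \<exists>\<psi>\<in>S. \<forall>i\<in>J. dist (\<psi> i) (\<mu> i) < \<epsilon>"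
  shows "\<mu> \<in> closure S"
  unfolding closure_iff_nhds_not_empty
proof (intro allI impI)
  fix A N assume NA: "N \<subseteq> A" and N: "open N" "\<mu> \<in> N"
  have "openin (product_topology (\<lambda>i. euclidean) UNIV) N" using N by (simp add: open_fun_def)
  then obtain U where U: "finite {i. U i \<noteq> topspace euclidean}" "\<And>i. open (U i)"
      "\<mu> \<in> Pi\<^sub>E UNIV U" "Pi\<^sub>E UNIV U \<subseteq> N"
    using N(2) unfolding openin_product_topology_alt by auto
  define J where "J = {i. U i \<noteq> UNIV}"
  have J: "finite J" using U(1) by (simp add: J_def)
  have "\<exists>e>0. ball (\<mu> i) e \<subseteq> U i" for i
    using U(2,3) by (simp add: PiE_iff open_contains_ball)
  then obtain e where e: "\<And>i. e i > 0" "\<And>i. ball (\<mu> i) (e i) \<subseteq> U i" by metis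
  define \<epsilon> where "\<epsilon> = Min (insert 1 (e ` J))"
  have \<epsilon>: "\<epsilon> > 0" "\<And>i. i \<in> J \<Longrightarrow> \<epsilon> \<le> e i"
    unfolding \<epsilon>_def using J e by (auto simp: Min_gr_iff)
  obtain \<psi> where \<psi>: "\<psi> \<in> S" "\<And>i. i \<in> J \<Longrightarrow> dist (\<psi> i) (\<mu> i) < \<epsilon>"
    using approx[OF J \<epsilon>(1)] by blast
  have "\<psi> i \<in> U i" for i
  proof (cases "i \<in> J")
    case True
    then have "dist (\<mu> i) (\<psi> i) < e i" using \<psi>(2) \<epsilon>(2) by (smt (verit) dist_commute)
    then show ?thesis using e(2)[of i] by auto
  qed (simp add: J_def)
  then have "\<psi> \<in> A" using U(4) NA by (auto simp: PiE_iff)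
  then show "S \<inter> A \<noteq> {}" using \<psi>(1) by blast
qed


section \<open>Central measures on a compact group\<close>

context group
begin

lemma inv_mult_cancel_left [simp]: "x \<in> carrier G \<Longrightarrow> y \<in> carrier G \<Longrightarrow> inv x \<otimes> (x \<otimes> y) = y"
  and mult_inv_cancel_left [simp]: "x \<in> carrier G \<Longrightarrow> y \<in> carrier G \<Longrightarrow> x \<otimes> (inv x \<otimes> y) = y"
  by (simp_all flip: m_assoc)

end

locale compact_grp =
  fixes G (structure) and T :: "'a topology"
  assumes compact_group: "compact_group G T"
begin

lemma group: "group G"
  and topspace_eq_carrier: "topspace T = carrier G"
  and compact: "compact_space T"
  and Hausdorff: "Hausdorff_space T"
  and continuous_map_mult_pair: "continuous_map (prod_topology T T) T (\<lambda>p. fst p \<otimes> snd p)"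
  and continuous_map_inv: "continuous_map T T (\<lambda>x. inv x)"
  using compact_group by (auto simp: compact_group_def)

sublocale group G by (rule group)

lemma topspace_nonempty: "topspace T \<noteq> {}"
  using topspace_eq_carrier by auto

lemma continuous_map_group_mult [continuous_intros]:
  "continuous_map X T f \<Longrightarrow> continuous_map X T g \<Longrightarrow> continuous_map X T (\<lambda>x. f x \<otimes> g x)"
  using continuous_map_compose[OF continuous_map_pairedI continuous_map_mult_pair, of X f g]
  by (simp add: o_def)

lemma continuous_map_group_inv [continuous_intros]:
  "continuous_map X T f \<Longrightarrow> continuous_map X T (\<lambda>x. inv (f x))"
  using continuous_map_compose[OF _ continuous_map_inv, of X f] by (simp add: o_def)

lemma continuous_map_group_const [continuous_intros]:
  "a \<in> carrier G \<Longrightarrow> continuous_map X T (\<lambda>x. a)"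
  by (simp add: topspace_eq_carrier)

lemma Cfun_conv_inner:
  assumes "u \<in> Cfun T" "\<nu> \<in> Meas T"
  shows "(\<lambda>s. if s \<in> topspace T then \<nu> (\<lambda>t. if t \<in> topspace T then u (s \<otimes> t) else 0) else 0) \<in> Cfun T"
proof -
  have "continuous_map (prod_topology T T) euclidean (\<lambda>p. u (fst p \<otimes> snd p))"
    by (intro continuous_map_Cfun_compose[OF assms(1)] continuous_intros continuous_map_fst continuous_map_snd)
  from Cfun_parametric[OF compact topspace_nonempty this assms(2)] show ?thesis unfolding prod.sel .
qed

definition conj_invariant :: "(('a \<Rightarrow> complex) \<Rightarrow> complex) \<Rightarrow> bool" where
  "conj_invariant \<mu> \<longleftrightarrow>
     (\<forall>x\<in>carrier G. \<forall>u\<in>Cfun T. \<mu> (\<lambda>s. if s \<in> topspace T then u (x \<otimes> s \<otimes> inv x) else 0) = \<mu> u)"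

lemma conj_invariant_pushforward:
  assumes "\<mu> \<in> Meas T"
  shows "conj_invariant \<mu> \<longleftrightarrow> (\<forall>x\<in>carrier G. pushforward T T (\<lambda>s. x \<otimes> s \<otimes> inv x) \<mu> = \<mu>)"
  unfolding conj_invariant_def fun_eq_iff pushforward_def
  using Meas_outside[OF assms] by metis

lemma conv_dirac_right:
  assumes "a \<in> carrier G" "u \<in> Cfun T"
  shows "conv G T \<mu> (dirac T a) u = \<mu> (\<lambda>s. if s \<in> topspace T then u (s \<otimes> a) else 0)"
proof -
  have "(\<lambda>t. if t \<in> topspace T then u (s \<otimes> t) else 0) \<in> Cfun T" if "s \<in> topspace T" for s
    using assms that by (intro Cfun_compose[OF assms(2)] continuous_intros) (auto simp: topspace_eq_carrier)
  then show ?thesis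
    using assms by (simp add: conv_def dirac_def topspace_eq_carrier cong: if_cong)
qed

lemma conv_dirac_left:
  assumes "a \<in> carrier G" "u \<in> Cfun T" "\<mu> \<in> Meas T"
  shows "conv G T (dirac T a) \<mu> u = \<mu> (\<lambda>t. if t \<in> topspace T then u (a \<otimes> t) else 0)"
  using assms Cfun_conv_inner[OF assms(2,3)] by (simp add: conv_def dirac_def topspace_eq_carrier)

lemma ZM_imp_conj_invariant:
  assumes "\<mu> \<in> ZM G T"
  shows "conj_invariant \<mu>"
  unfolding conj_invariant_def
proof (intro ballI)
  have \<mu>: "\<mu> \<in> Meas T" using assms by (simp add: ZM_def)
  fix x u assume x: "x \<in> carrier G" and u: "u \<in> Cfun T"
  define w where "w = (\<lambda>s. if s \<in> topspace T then u (s \<otimes> inv x) else 0)"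
  have w: "w \<in> Cfun T" unfolding w_def using x by (intro Cfun_compose[OF u] continuous_intros) auto
  have "dirac T x \<in> Meas T" using x by (intro dirac_Meas compact) (simp add: topspace_eq_carrier)
  then have "conv G T \<mu> (dirac T x) w = conv G T (dirac T x) \<mu> w"
    using assms by (simp add: ZM_def)
  then have "\<mu> (\<lambda>s. if s \<in> topspace T then w (s \<otimes> x) else 0) = \<mu> (\<lambda>t. if t \<in> topspace T then w (x \<otimes> t) else 0)"
    by (simp add: conv_dirac_right[OF x w] conv_dirac_left[OF x w \<mu>])
  moreover have "(\<lambda>s. if s \<in> topspace T then w (s \<otimes> x) else 0) = u"
    using u x by (intro ext) (auto simp: w_def topspace_eq_carrier m_assoc Cfun_outside)
  moreover have "(\<lambda>t. if t \<in> topspace T then w (x \<otimes> t) else 0) = (\<lambda>s. if s \<in> topspace T then u (x \<otimes> s \<otimes> inv x) else 0)"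
    using x by (intro ext) (auto simp: w_def topspace_eq_carrier)
  ultimately show "\<mu> (\<lambda>s. if s \<in> topspace T then u (x \<otimes> s \<otimes> inv x) else 0) = \<mu> u" by simp
qed

text \<open>Conjugation invariance turns \<open>\<mu> * \<nu>\<close> into an iterated functional with the factors of
  \<open>u(st)\<close> swapped, and Fubini then identifies it with \<open>\<nu> * \<mu>\<close>.\<close>

lemma conj_invariant_imp_ZM:
  assumes \<mu>: "\<mu> \<in> Meas T" and ci: "conj_invariant \<mu>"
  shows "\<mu> \<in> ZM G T"
  unfolding ZM_def
proof (intro CollectI conjI ballI \<mu> ext)
  fix \<nu> u assume \<nu>: "\<nu> \<in> Meas T"
  show "conv G T \<mu> \<nu> u = conv G T \<nu> \<mu> u"
  proof (cases "u \<in> Cfun T")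
    case u: True
    have F: "continuous_map (prod_topology T T) euclidean (\<lambda>p. u (fst p \<otimes> snd p))"
      by (intro continuous_map_Cfun_compose[OF u] continuous_intros continuous_map_fst continuous_map_snd)
    have swap: "\<mu> (\<lambda>t. if t \<in> topspace T then u (s \<otimes> t) else 0) = \<mu> (\<lambda>t. if t \<in> topspace T then u (t \<otimes> s) else 0)"
      if s: "s \<in> topspace T" for s
    proof -
      define w where "w = (\<lambda>t. if t \<in> topspace T then u (t \<otimes> s) else 0)"
      have "w \<in> Cfun T"
        unfolding w_def using s by (intro Cfun_compose[OF u] continuous_intros) (auto simp: topspace_eq_carrier)
      then have "\<mu> (\<lambda>t. if t \<in> topspace T then w (s \<otimes> t \<otimes> inv s) else 0) = \<mu> w"
        using ci s by (auto simp: conj_invariant_def topspace_eq_carrier)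
      moreover have "(\<lambda>t. if t \<in> topspace T then w (s \<otimes> t \<otimes> inv s) else 0) = (\<lambda>t. if t \<in> topspace T then u (s \<otimes> t) else 0)"
        using s by (intro ext) (auto simp: w_def topspace_eq_carrier m_assoc)
      ultimately show ?thesis by (simp add: w_def)
    qed
    have "conv G T \<nu> \<mu> u = \<nu> (\<lambda>s. if s \<in> topspace T then \<mu> (\<lambda>t. if t \<in> topspace T then u (t \<otimes> s) else 0) else 0)"
      using u swap by (simp add: conv_def cong: if_cong)
    also have "\<dots> = \<mu> (\<lambda>t. if t \<in> topspace T then \<nu> (\<lambda>s. if s \<in> topspace T then u (t \<otimes> s) else 0) else 0)"
      using iterated_integral_swap[OF compact Hausdorff topspace_nonempty compact topspace_nonempty F \<mu> \<nu>]
      unfolding iterated_integral_def prod.sel by (rule sym)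
    also have "\<dots> = conv G T \<mu> \<nu> u" using u by (simp add: conv_def)
    finally show ?thesis by simp
  qed (simp add: conv_def)
qed

lemma ZM_iff_conj_invariant: "\<mu> \<in> ZM G T \<longleftrightarrow> \<mu> \<in> Meas T \<and> conj_invariant \<mu>"
  using ZM_imp_conj_invariant conj_invariant_imp_ZM by (auto simp: ZM_def)

lemma ZM_closed: "closedin (subtopology euclidean (Meas T)) (ZM G T)"
proof -
  define C :: "(('a \<Rightarrow> complex) \<Rightarrow> complex) set" where
    "C = (\<Inter>(x, u)\<in>carrier G \<times> Cfun T. {\<phi>. \<phi> (\<lambda>s. if s \<in> topspace T then u (x \<otimes> s \<otimes> inv x) else 0) = \<phi> u})"
  have "closed C" unfolding C_def
    by (intro closed_INT) (auto intro!: closed_Collect_eq continuous_on_product_coordinates)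
  moreover have "ZM G T = Meas T \<inter> C"
    by (auto simp: ZM_iff_conj_invariant conj_invariant_def C_def)
  ultimately show ?thesis by (simp add: closedin_closed_Int)
qed

end


section \<open>The multiplication map \<open>mtilde\<close>\<close>

lemma compact_grp_DirProd:
  assumes "compact_grp G T" "compact_grp H S"
  shows "compact_grp (G \<times>\<times> H) (prod_topology T S)"
proof -
  interpret G: compact_grp G T by fact
  interpret H: compact_grp H S by fact
  have "continuous_map (prod_topology (prod_topology T S) (prod_topology T S)) (prod_topology T S)
      (\<lambda>p. (fst (fst p) \<otimes>\<^bsub>G\<^esub> fst (snd p), snd (fst p) \<otimes>\<^bsub>H\<^esub> snd (snd p)))"
    by (intro continuous_map_pairedI G.continuous_map_group_mult H.continuous_map_group_mult
        continuous_map_compose[OF continuous_map_fst continuous_map_fst, unfolded o_def]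
        continuous_map_compose[OF continuous_map_snd continuous_map_fst, unfolded o_def]
        continuous_map_compose[OF continuous_map_fst continuous_map_snd, unfolded o_def]
        continuous_map_compose[OF continuous_map_snd continuous_map_snd, unfolded o_def])
  then have mult: "continuous_map (prod_topology (prod_topology T S) (prod_topology T S)) (prod_topology T S)
      (\<lambda>p. fst p \<otimes>\<^bsub>G \<times>\<times> H\<^esub> snd p)"
    by (simp add: mult_DirProd')
  have "continuous_map (prod_topology T S) (prod_topology T S) (\<lambda>p. (inv\<^bsub>G\<^esub> (fst p), inv\<^bsub>H\<^esub> (snd p)))"
    by (intro continuous_map_pairedI G.continuous_map_group_inv H.continuous_map_group_inv
        continuous_map_fst continuous_map_snd)
  then have inv: "continuous_map (prod_topology T S) (prod_topology T S) (\<lambda>p. inv\<^bsub>G \<times>\<times> H\<^esub> p)"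
    by (rule continuous_map_eq)
      (auto simp: G.topspace_eq_carrier H.topspace_eq_carrier inv_DirProd[OF G.group H.group])
  show ?thesis
    unfolding compact_grp_def compact_group_def
    using mult inv DirProd_group[OF G.group H.group] G.compact H.compact G.Hausdorff H.Hausdorff
    by (auto simp: G.topspace_eq_carrier H.topspace_eq_carrier compact_space_prod_topology
        Hausdorff_space_prod_topology)
qed

lemma mtilde_eq_pushforward: "mtilde G T = pushforward (prod_topology T T) T (\<lambda>p. fst p \<otimes>\<^bsub>G\<^esub> snd p)"
  by (simp add: fun_eq_iff mtilde_def pushforward_def)

lemma mtilde_linear:
  "mtilde G T (\<lambda>u. a * \<mu> u + b * \<nu> u) = (\<lambda>u. a * mtilde G T \<mu> u + b * mtilde G T \<nu> u)"
  by (auto simp: mtilde_def)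

context compact_grp
begin

abbreviation "T2 \<equiv> prod_topology T T"

lemma compact_grp_square: "compact_grp (G \<times>\<times> G) T2"
  by (intro compact_grp_DirProd compact_grp_axioms)

lemma mtilde_Meas:
  assumes "\<mu> \<in> Meas T2"
  shows "mtilde G T \<mu> \<in> Meas T"
proof -
  interpret P: compact_grp "G \<times>\<times> G" T2 by (rule compact_grp_square)
  show ?thesis
    unfolding mtilde_eq_pushforward
    by (intro Meas_pushforward assms P.compact P.topspace_nonempty compact continuous_map_mult_pair)
qed

lemma mtilde_ZM:
  assumes \<mu>: "\<mu> \<in> ZM (G \<times>\<times> G) T2"
  shows "mtilde G T \<mu> \<in> ZM G T"
proof -
  interpret P: compact_grp "G \<times>\<times> G" T2 by (rule compact_grp_square)
  have \<mu>M: "\<mu> \<in> Meas T2" and ci: "P.conj_invariant \<mu>" using \<mu> P.ZM_iff_conj_invariant by auto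
  have "pushforward T T (\<lambda>s. x \<otimes> s \<otimes> inv x) (mtilde G T \<mu>) = mtilde G T \<mu>" if x: "x \<in> carrier G" for x
  proof -
    have xx: "(x, x) \<in> carrier (G \<times>\<times> G)" using x by simp
    have "pushforward T T (\<lambda>s. x \<otimes> s \<otimes> inv x) (mtilde G T \<mu>)
        = pushforward T2 T (\<lambda>p. x \<otimes> (fst p \<otimes> snd p) \<otimes> inv x) \<mu>"
      unfolding mtilde_eq_pushforward using x
      by (intro pushforward_compose continuous_map_mult_pair continuous_intros) auto
    also have "\<dots> = pushforward T2 T (\<lambda>p. fst p \<otimes> snd p)
        (pushforward T2 T2 (\<lambda>p. (x, x) \<otimes>\<^bsub>G \<times>\<times> G\<^esub> p \<otimes>\<^bsub>G \<times>\<times> G\<^esub> inv\<^bsub>G \<times>\<times> G\<^esub> (x, x)) \<mu>)"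
      using x xx
      by (subst pushforward_compose[OF _ continuous_map_mult_pair])
        (auto intro!: pushforward_cong continuous_intros
          simp: topspace_eq_carrier mult_DirProd' inv_DirProd[OF group group] m_assoc)
    also have "\<dots> = mtilde G T \<mu>"
      using ci xx P.conj_invariant_pushforward[OF \<mu>M] by (simp add: mtilde_eq_pushforward)
    finally show ?thesis .
  qed
  then show ?thesis
    using conj_invariant_pushforward mtilde_Meas[OF \<mu>M] ZM_iff_conj_invariant by blast
qed

lemma ZM_subset_mtilde_image:
  assumes \<mu>: "\<mu> \<in> ZM G T"
  shows "\<mu> \<in> mtilde G T ` ZM (G \<times>\<times> G) T2"
proof -
  interpret P: compact_grp "G \<times>\<times> G" T2 by (rule compact_grp_square)
  have \<mu>M: "\<mu> \<in> Meas T" and ci: "conj_invariant \<mu>" using \<mu> ZM_iff_conj_invariant by auto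
  have emb: "continuous_map T T2 (\<lambda>s. (s, \<one>))"
    by (intro continuous_map_pairedI continuous_intros) simp
  define \<nu> where "\<nu> = pushforward T T2 (\<lambda>s. (s, \<one>)) \<mu>"
  have \<nu>M: "\<nu> \<in> Meas T2"
    unfolding \<nu>_def by (intro Meas_pushforward \<mu>M compact topspace_nonempty P.compact emb)
  have "pushforward T2 T2 (\<lambda>p. q \<otimes>\<^bsub>G \<times>\<times> G\<^esub> p \<otimes>\<^bsub>G \<times>\<times> G\<^esub> inv\<^bsub>G \<times>\<times> G\<^esub> q) \<nu> = \<nu>"
    if q: "q \<in> carrier (G \<times>\<times> G)" for q
  proof -
    obtain x y where q': "q = (x, y)" "x \<in> carrier G" "y \<in> carrier G" using q by auto
    have "pushforward T2 T2 (\<lambda>p. q \<otimes>\<^bsub>G \<times>\<times> G\<^esub> p \<otimes>\<^bsub>G \<times>\<times> G\<^esub> inv\<^bsub>G \<times>\<times> G\<^esub> q) \<nu>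
        = pushforward T T2 (\<lambda>s. q \<otimes>\<^bsub>G \<times>\<times> G\<^esub> (s, \<one>) \<otimes>\<^bsub>G \<times>\<times> G\<^esub> inv\<^bsub>G \<times>\<times> G\<^esub> q) \<mu>"
      unfolding \<nu>_def using q by (intro pushforward_compose emb continuous_intros) auto
    also have "\<dots> = pushforward T T2 (\<lambda>s. (x \<otimes> s \<otimes> inv x, \<one>)) \<mu>"
      using q' by (intro pushforward_cong) (simp add: topspace_eq_carrier inv_DirProd[OF group group])
    also have "\<dots> = \<nu>"
    proof -
      have "continuous_map T T (\<lambda>s. x \<otimes> s \<otimes> inv x)" using q' by (intro continuous_intros) auto
      from pushforward_compose[OF this emb, of \<mu>] show ?thesis
        using q' ci conj_invariant_pushforward[OF \<mu>M] by (simp add: \<nu>_def)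
    qed
    finally show ?thesis .
  qed
  then have "\<nu> \<in> ZM (G \<times>\<times> G) T2"
    using \<nu>M P.ZM_iff_conj_invariant P.conj_invariant_pushforward by blast
  moreover have "mtilde G T \<nu> = \<mu>"
    unfolding \<nu>_def mtilde_eq_pushforward
    by (simp add: pushforward_compose[OF emb continuous_map_mult_pair])
      (rule pushforward_identity[OF \<mu>M], simp add: topspace_eq_carrier)
  ultimately show ?thesis by blast
qed

text \<open>Conjugating by \<open>(b, 1)\<close> moves \<open>b\<close> past the first coordinate: \<open>a (b s b\<^sup>-\<^sup>1) (b t) = a b s t\<close>.\<close>

lemma ZM_square_shift:
  assumes \<nu>: "\<nu> \<in> ZM (G \<times>\<times> G) T2" and u: "u \<in> Cfun T" and ab: "a \<in> carrier G" "b \<in> carrier G"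
  shows "\<nu> (\<lambda>q. if q \<in> topspace T2 then u (a \<otimes> fst q \<otimes> (b \<otimes> snd q)) else 0)
       = mtilde G T \<nu> (\<lambda>t. if t \<in> topspace T then u (a \<otimes> b \<otimes> t) else 0)"
proof -
  interpret P: compact_grp "G \<times>\<times> G" T2 by (rule compact_grp_square)
  have ci: "P.conj_invariant \<nu>" using \<nu> P.ZM_iff_conj_invariant by auto
  define F where "F = (\<lambda>q. if q \<in> topspace T2 then u (a \<otimes> fst q \<otimes> (b \<otimes> snd q)) else 0)"
  have "F \<in> Cfun T2"
    unfolding F_def using ab
    by (intro Cfun_compose[OF u] continuous_intros continuous_map_fst continuous_map_snd) auto
  moreover have "(b, \<one>) \<in> carrier (G \<times>\<times> G)" using ab by simp
  ultimately have "\<nu> (\<lambda>q. if q \<in> topspace T2 then F ((b, \<one>) \<otimes>\<^bsub>G \<times>\<times> G\<^esub> q \<otimes>\<^bsub>G \<times>\<times> G\<^esub> inv\<^bsub>G \<times>\<times> G\<^esub> (b, \<one>)) else 0)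
      = \<nu> F"
    using ci unfolding P.conj_invariant_def by blast
  moreover have "(\<lambda>q. if q \<in> topspace T2 then F ((b, \<one>) \<otimes>\<^bsub>G \<times>\<times> G\<^esub> q \<otimes>\<^bsub>G \<times>\<times> G\<^esub> inv\<^bsub>G \<times>\<times> G\<^esub> (b, \<one>)) else 0)
      = (\<lambda>q. if q \<in> topspace T2 then u (a \<otimes> b \<otimes> (fst q \<otimes> snd q)) else 0)"
    using ab by (intro ext) (auto simp: F_def topspace_eq_carrier inv_DirProd[OF group group] mult_DirProd' m_assoc)
  moreover have "(\<lambda>t. if t \<in> topspace T then u (a \<otimes> b \<otimes> t) else 0) \<in> Cfun T"
    using ab by (intro Cfun_compose[OF u] continuous_intros) auto
  ultimately show ?thesis
    by (simp add: F_def mtilde_def topspace_eq_carrier mem_Times_iff cong: if_cong)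
qed

lemma mtilde_conv:
  assumes \<nu>: "\<nu> \<in> ZM (G \<times>\<times> G) T2"
  shows "mtilde G T (conv (G \<times>\<times> G) T2 \<mu> \<nu>) = conv G T (mtilde G T \<mu>) (mtilde G T \<nu>)"
proof
  fix u show "mtilde G T (conv (G \<times>\<times> G) T2 \<mu> \<nu>) u = conv G T (mtilde G T \<mu>) (mtilde G T \<nu>) u"
  proof (cases "u \<in> Cfun T")
    case u: True
    have \<nu>M: "\<nu> \<in> Meas T2" using \<nu> by (simp add: ZM_def)
    have "mtilde G T (conv (G \<times>\<times> G) T2 \<mu> \<nu>) u
        = \<mu> (\<lambda>p. if p \<in> topspace T2 then \<nu> (\<lambda>q. if q \<in> topspace T2 then u (fst p \<otimes> fst q \<otimes> (snd p \<otimes> snd q)) else 0) else 0)"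
      using u Cfun_compose[OF u continuous_map_mult_pair]
      by (simp add: mtilde_def conv_def topspace_eq_carrier mult_DirProd' mem_Times_iff cong: if_cong)
    also have "\<dots> = \<mu> (\<lambda>p. if p \<in> topspace T2 then mtilde G T \<nu> (\<lambda>t. if t \<in> topspace T then u (fst p \<otimes> snd p \<otimes> t) else 0) else 0)"
      using ZM_square_shift[OF \<nu> u] by (auto simp: topspace_eq_carrier intro!: arg_cong[where f = \<mu>])
    also have "\<dots> = conv G T (mtilde G T \<mu>) (mtilde G T \<nu>) u"
    proof -
      have "(\<lambda>t. if t \<in> carrier G then u (s \<otimes> t) else 0) \<in> Cfun T" if "s \<in> carrier G" for s
        using that Cfun_compose[OF u, of T "\<lambda>t. s \<otimes> t"] by (simp add: continuous_intros topspace_eq_carrier)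
      then show ?thesis
        using u Cfun_conv_inner[OF u mtilde_Meas[OF \<nu>M]]
        by (simp add: conv_def mtilde_def topspace_eq_carrier mem_Times_iff cong: if_cong)
    qed
    finally show ?thesis .
  qed (simp add: mtilde_def conv_def)
qed

end


section \<open>The Haar integral\<close>

locale haar_grp = compact_grp +
  fixes m :: "'a measure"
  assumes haar: "haar_measure G T m"
begin

lemma space_haar: "space m = topspace T"
  and prob_space_haar: "prob_space m"
  and haar_left_invariant: "\<And>x A. x \<in> carrier G \<Longrightarrow> A \<in> sets m \<Longrightarrow> emeasure m ((\<lambda>s. x \<otimes> s) ` A) = emeasure m A"
  using haar by (auto simp: haar_measure_def)

lemma sets_haar: "sets m = sigma_sets (topspace T) {U. openin T U}"
proof -
  have "sets m = sets (borel_of T)" using haar by (simp add: haar_measure_def)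
  also have "\<dots> = sigma_sets (topspace T) {U. openin T U}"
    unfolding borel_of_def by (rule sets_measure_of) (auto dest: openin_subset)
  finally show ?thesis .
qed

interpretation prob_space m by (rule prob_space_haar)

lemma openin_sets_haar: "openin T U \<Longrightarrow> U \<in> sets m"
  by (simp add: sets_haar)

lemma continuous_map_borel_measurable:
  fixes f :: "'a \<Rightarrow> 'z::topological_space"
  assumes "continuous_map T euclidean f"
  shows "f \<in> borel_measurable m"
proof (rule borel_measurableI)
  fix S :: "'z set" assume "open S"
  then have "openin T {x \<in> topspace T. f x \<in> S}"
    using openin_continuous_map_preimage[OF assms] by simp
  then show "f -` S \<inter> space m \<in> sets m" using openin_sets_haar by (simp add: space_haar Int_def conj_commute)
qed

lemma continuous_map_measurable:
  assumes "continuous_map T T h"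
  shows "h \<in> measurable m m"
proof (rule measurable_sigma_sets[OF sets_haar])
  show "{U. openin T U} \<subseteq> Pow (topspace T)" by (auto dest: openin_subset)
  show "h \<in> space m \<rightarrow> topspace T" using assms by (auto simp: space_haar continuous_map_def)
  fix U assume "U \<in> {U. openin T U}"
  then have "openin T {x \<in> topspace T. h x \<in> U}" using openin_continuous_map_preimage[OF assms] by simp
  then show "h -` U \<inter> space m \<in> sets m" using openin_sets_haar by (simp add: space_haar Int_def conj_commute)
qed

lemma Cfun_integrable: "u \<in> Cfun T \<Longrightarrow> integrable m u"
  by (intro integrable_const_bound[where B="supnorm T u"] AE_I2 continuous_map_borel_measurable
      Cfun_continuous_map) (auto simp: space_haar supnorm_upper compact)

definition haar_integral :: "('a \<Rightarrow> complex) \<Rightarrow> complex" where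
  "haar_integral u = (if u \<in> Cfun T then integral\<^sup>L m u else 0)"

lemma haar_integral_apply: "u \<in> Cfun T \<Longrightarrow> haar_integral u = integral\<^sup>L m u"
  by (simp add: haar_integral_def)

lemma haar_integral_Meas: "haar_integral \<in> Meas T"
  unfolding Meas_def
proof (intro CollectI conjI ballI allI impI exI)
  fix u assume u: "u \<in> Cfun T"
  have "cmod (haar_integral u) \<le> integral\<^sup>L m (\<lambda>x. cmod (u x))"
    using u by (simp add: haar_integral_def integral_norm_bound)
  also have "\<dots> \<le> integral\<^sup>L m (\<lambda>x. supnorm T u)"
    using u by (intro integral_mono Cfun_integrable integrable_norm) (auto simp: space_haar supnorm_upper compact)
  also have "\<dots> = 1 * supnorm T u" by (simp add: prob_space)
  finally show "cmod (haar_integral u) \<le> 1 * supnorm T u" .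
qed (simp_all add: haar_integral_def Cfun_add Cfun_cmult Cfun_integrable)

lemma haar_integral_const: "haar_integral (\<lambda>x. if x \<in> topspace T then c else 0) = c"
proof -
  have "integral\<^sup>L m (\<lambda>x. if x \<in> topspace T then c else 0) = integral\<^sup>L m (\<lambda>x. c)"
    by (intro Bochner_Integration.integral_cong) (auto simp: space_haar)
  then show ?thesis by (simp add: haar_integral_apply[OF Cfun_const] prob_space)
qed

lemma distr_left_translation: 
  assumes x: "x \<in> carrier G"
  shows "distr m m (\<lambda>s. x \<otimes> s) = m"
proof (rule measure_eqI)
  fix A assume "A \<in> sets (distr m m (\<lambda>s. x \<otimes> s))"
  then have A: "A \<in> sets m" by simp
  have "(\<lambda>s. x \<otimes> s) -` A \<inter> space m = (\<lambda>s. inv x \<otimes> s) ` A"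
  proof
    show "(\<lambda>s. x \<otimes> s) -` A \<inter> space m \<subseteq> (\<lambda>s. inv x \<otimes> s) ` A"
      using x by (auto simp: space_haar topspace_eq_carrier intro!: image_eqI[where x = "x \<otimes> _"])
    show "(\<lambda>s. inv x \<otimes> s) ` A \<subseteq> (\<lambda>s. x \<otimes> s) -` A \<inter> space m"
      using sets.sets_into_space[OF A] x by (auto simp: space_haar topspace_eq_carrier)
  qed
  moreover have "(\<lambda>s. x \<otimes> s) \<in> measurable m m"
    using x by (intro continuous_map_measurable continuous_intros)
  ultimately show "emeasure (distr m m (\<lambda>s. x \<otimes> s)) A = emeasure m A"
    using emeasure_distr[OF _ A, of "\<lambda>s. x \<otimes> s" m] haar_left_invariant[OF inv_closed[OF x] A] by simp
qed simp

lemma haar_integral_left_invariant: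
  assumes x: "x \<in> carrier G" and u: "u \<in> Cfun T"
  shows "haar_integral (\<lambda>s. if s \<in> topspace T then u (x \<otimes> s) else 0) = haar_integral u"
proof -
  have "integral\<^sup>L m (\<lambda>s. if s \<in> topspace T then u (x \<otimes> s) else 0) = integral\<^sup>L m (\<lambda>s. u (x \<otimes> s))"
    by (intro Bochner_Integration.integral_cong) (auto simp: space_haar)
  also have "\<dots> = integral\<^sup>L (distr m m (\<lambda>s. x \<otimes> s)) u"
    using x by (intro integral_distr[symmetric] continuous_map_measurable continuous_map_borel_measurable
        Cfun_continuous_map u continuous_intros) auto
  also have "\<dots> = integral\<^sup>L m u" using distr_left_translation[OF x] by simp
  moreover have "(\<lambda>s. if s \<in> topspace T then u (x \<otimes> s) else 0) \<in> Cfun T"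
    using x by (intro Cfun_compose[OF u] continuous_intros)
  ultimately show ?thesis
    by (simp add: haar_integral_apply u)
qed

lemma pushforward_inv_haar_integral_right_invariant:
  assumes z: "z \<in> carrier G" and u: "u \<in> Cfun T"
  shows "pushforward T T (\<lambda>x. inv x) haar_integral (\<lambda>s. if s \<in> topspace T then u (s \<otimes> z) else 0)
       = pushforward T T (\<lambda>x. inv x) haar_integral u"
proof -
  define w where "w = (\<lambda>t. if t \<in> topspace T then u (inv t) else 0)"
  have w: "w \<in> Cfun T" unfolding w_def by (intro Cfun_compose[OF u] continuous_intros)
  have "(\<lambda>s. if s \<in> topspace T then if inv s \<in> topspace T then u (inv s \<otimes> z) else 0 else 0)
      = (\<lambda>s. if s \<in> topspace T then w (inv z \<otimes> s) else 0)"
    using z by (intro ext) (auto simp: w_def topspace_eq_carrier inv_mult_group)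
  moreover have "(\<lambda>s. if s \<in> topspace T then u (s \<otimes> z) else 0) \<in> Cfun T"
    using z by (intro Cfun_compose[OF u] continuous_intros)
  ultimately show ?thesis
    using haar_integral_left_invariant[OF inv_closed[OF z] w] u by (simp add: pushforward_apply w_def)
qed

text \<open>Compact groups are unimodular. Fubini, applied to \<open>u(yx)\<close> with the left invariant
  \<open>haar_integral\<close> in \<open>x\<close> and the right invariant reflected integral in \<open>y\<close>, shows that
  both integrals of \<open>u\<close> coincide.\<close>

lemma haar_integral_inv: "pushforward T T (\<lambda>x. inv x) haar_integral = haar_integral"
proof
  define \<rho> where "\<rho> = pushforward T T (\<lambda>x. inv x) haar_integral"
  have \<rho>: "\<rho> \<in> Meas T"
    unfolding \<rho>_def by (intro Meas_pushforward haar_integral_Meas compact topspace_nonempty continuous_intros)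
  have \<rho>_const: "\<rho> (\<lambda>y. if y \<in> topspace T then c else 0) = c" for c
  proof -
    have "(\<lambda>s. if s \<in> topspace T then if inv s \<in> topspace T then c else 0 else 0) = (\<lambda>s. if s \<in> topspace T then c else 0)"
      by (auto simp: topspace_eq_carrier)
    then show ?thesis using Cfun_const[of T c] by (simp add: \<rho>_def pushforward_apply haar_integral_const)
  qed
  fix u show "\<rho> u = haar_integral u"
  proof (cases "u \<in> Cfun T")
    case u: True
    have F: "continuous_map (prod_topology T T) euclidean (\<lambda>p. u (snd p \<otimes> fst p))"
      by (intro continuous_map_Cfun_compose[OF u] continuous_intros continuous_map_fst continuous_map_snd)
    have "(\<lambda>x. if x \<in> topspace T then \<rho> (\<lambda>y. if y \<in> topspace T then u (y \<otimes> x) else 0) else 0)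
        = (\<lambda>x. if x \<in> topspace T then \<rho> u else 0)"
      by (intro ext) (simp add: \<rho>_def pushforward_inv_haar_integral_right_invariant[OF _ u]
          topspace_eq_carrier[symmetric] cong: if_cong)
    moreover have "(\<lambda>y. if y \<in> topspace T then haar_integral (\<lambda>x. if x \<in> topspace T then u (y \<otimes> x) else 0) else 0)
        = (\<lambda>y. if y \<in> topspace T then haar_integral u else 0)"
      by (intro ext) (simp add: haar_integral_left_invariant[OF _ u] topspace_eq_carrier[symmetric] cong: if_cong)
    moreover have "haar_integral (\<lambda>x. if x \<in> topspace T then \<rho> (\<lambda>y. if y \<in> topspace T then u (y \<otimes> x) else 0) else 0)
        = \<rho> (\<lambda>y. if y \<in> topspace T then haar_integral (\<lambda>x. if x \<in> topspace T then u (y \<otimes> x) else 0) else 0)"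
      using iterated_integral_swap[OF compact Hausdorff topspace_nonempty compact topspace_nonempty F haar_integral_Meas \<rho>]
      unfolding iterated_integral_def prod.sel .
    ultimately show ?thesis by (simp add: haar_integral_const \<rho>_const)
  qed (simp add: \<rho>_def pushforward_def haar_integral_def)
qed

lemma haar_integral_right_invariant:
  assumes z: "z \<in> carrier G" and u: "u \<in> Cfun T"
  shows "haar_integral (\<lambda>s. if s \<in> topspace T then u (s \<otimes> z) else 0) = haar_integral u"
  using pushforward_inv_haar_integral_right_invariant[OF z u] by (simp add: haar_integral_inv)

lemma haar_integral_conj_invariant: "conj_invariant haar_integral"
  unfolding conj_invariant_def
proof (intro ballI)
  fix y u assume y: "y \<in> carrier G" and u: "u \<in> Cfun T"
  define w where "w = (\<lambda>t. if t \<in> topspace T then u (t \<otimes> inv y) else 0)"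
  have w: "w \<in> Cfun T" unfolding w_def using y by (intro Cfun_compose[OF u] continuous_intros) auto
  have "(\<lambda>s. if s \<in> topspace T then u (y \<otimes> s \<otimes> inv y) else 0) = (\<lambda>s. if s \<in> topspace T then w (y \<otimes> s) else 0)"
    using y by (intro ext) (auto simp: w_def topspace_eq_carrier)
  then show "haar_integral (\<lambda>s. if s \<in> topspace T then u (y \<otimes> s \<otimes> inv y) else 0) = haar_integral u"
    using haar_integral_left_invariant[OF y w] haar_integral_right_invariant[OF inv_closed[OF y] u]
    by (simp add: w_def)
qed

lemma haar_integral_Re: "u \<in> Cfun T \<Longrightarrow> Re (haar_integral u) = integral\<^sup>L m (\<lambda>x. Re (u x))"
  and haar_integral_Im: "u \<in> Cfun T \<Longrightarrow> Im (haar_integral u) = integral\<^sup>L m (\<lambda>x. Im (u x))"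
  using Cfun_integrable by (simp_all add: haar_integral_apply)

lemma haar_integral_mono_Re:
  assumes u: "u \<in> Cfun T" and v: "v \<in> Cfun T" and le: "\<And>x. x \<in> topspace T \<Longrightarrow> Re (u x) \<le> Re (v x)"
  shows "Re (haar_integral u) \<le> Re (haar_integral v)"
proof -
  have "Re (haar_integral v) - Re (haar_integral u) = integral\<^sup>L m (\<lambda>x. Re (v x - u x))"
    using Meas_diff[OF haar_integral_Meas v u] haar_integral_Re[OF Cfun_diff[OF v u]] by simp
  also have "\<dots> \<ge> 0" using le by (intro Bochner_Integration.integral_nonneg) (auto simp: space_haar)
  finally show ?thesis by simp
qed

lemma haar_integral_real_nonneg:
  assumes u: "u \<in> Cfun T" and r: "\<And>x. x \<in> topspace T \<Longrightarrow> Im (u x) = 0 \<and> Re (u x) \<ge> 0"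
  shows "Im (haar_integral u) = 0 \<and> Re (haar_integral u) \<ge> 0"
proof
  have "integral\<^sup>L m (\<lambda>x. Im (u x)) = integral\<^sup>L m (\<lambda>x. 0)"
    using r by (intro Bochner_Integration.integral_cong) (auto simp: space_haar)
  then show "Im (haar_integral u) = 0" by (simp add: haar_integral_Im[OF u])
  show "Re (haar_integral u) \<ge> 0"
    unfolding haar_integral_Re[OF u] using r by (intro Bochner_Integration.integral_nonneg) (auto simp: space_haar)
qed

lemma haar_integral_pos:
  assumes g: "g \<in> Cfun T" and nonneg: "\<And>x. x \<in> topspace T \<Longrightarrow> Im (g x) = 0 \<and> Re (g x) \<ge> 0"
    and x0: "x0 \<in> topspace T" "g x0 \<noteq> 0"
  shows "Re (haar_integral g) > 0"
proof -
  define c where "c = Re (g x0)"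
  have c: "c > 0" using nonneg[OF x0(1)] x0(2) by (simp add: c_def complex_eq_iff less_le)
  define U where "U = {x \<in> topspace T. Re (g x) \<in> {c/2<..}}"
  have U: "openin T U"
    unfolding U_def
    by (intro openin_continuous_map_preimage[where Y = euclideanreal] continuous_map_Re Cfun_continuous_map g) auto
  define W where "W x = {s \<in> topspace T. x0 \<otimes> inv x \<otimes> s \<in> U}" for x
  have "openin T (W x) \<and> x \<in> W x" if x: "x \<in> topspace T" for x
  proof
    show "openin T (W x)"
      unfolding W_def using x x0 by (intro openin_continuous_map_preimage[OF _ U] continuous_intros) auto
    show "x \<in> W x" using x x0 c by (simp add: W_def U_def topspace_eq_carrier m_assoc c_def)
  qed
  then obtain D where D: "finite D" "D \<subseteq> topspace T" "topspace T \<subseteq> (\<Union>x\<in>D. W x)"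
    using compact_space_point_cover[OF compact] by metis
  \<comment> \<open>the translates \<open>tr x\<close> of \<open>g\<close> sum to at least \<open>c/2\<close> everywhere and all have integral \<open>\<integral>g\<close>\<close>
  define tr where "tr x = (\<lambda>s. if s \<in> topspace T then g (x0 \<otimes> inv x \<otimes> s) else 0)" for x
  have tr: "tr x \<in> Cfun T" if "x \<in> D" for x
    unfolding tr_def using that D(2) x0 by (intro Cfun_compose[OF g] continuous_intros) (auto simp: topspace_eq_carrier)
  have "Re (haar_integral (\<lambda>s. if s \<in> topspace T then of_real (c/2) else 0)) \<le> Re (haar_integral (\<lambda>s. \<Sum>x\<in>D. tr x s))"
  proof (rule haar_integral_mono_Re[OF Cfun_const Cfun_sum[OF D(1) tr]])
    fix s assume s: "s \<in> topspace T"
    then obtain x where x: "x \<in> D" "s \<in> W x" using D by blast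
    have "c/2 \<le> Re (tr x s)" using x s by (auto simp: tr_def W_def U_def)
    also have "\<dots> \<le> (\<Sum>x'\<in>D. Re (tr x' s))"
      using D s x0 nonneg x by (intro member_le_sum) (auto simp: tr_def topspace_eq_carrier)
    finally show "Re (if s \<in> topspace T then of_real (c/2) else 0) \<le> Re (\<Sum>x\<in>D. tr x s)" using s by simp
  qed
  moreover have "haar_integral (\<lambda>s. \<Sum>x\<in>D. tr x s) = of_nat (card D) * haar_integral g"
  proof -
    have "haar_integral (tr x) = haar_integral g" if "x \<in> D" for x
      unfolding tr_def using that D(2) x0 by (intro haar_integral_left_invariant[OF _ g]) (auto simp: topspace_eq_carrier)
    then show ?thesis by (simp add: Meas_sum[OF haar_integral_Meas D(1) tr])
  qed
  ultimately have "c/2 \<le> real (card D) * Re (haar_integral g)"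
    by (simp add: haar_integral_const)
  moreover have "Re (haar_integral g) \<ge> 0" using haar_integral_real_nonneg[OF g nonneg] by blast
  ultimately show ?thesis using c by (cases "Re (haar_integral g) = 0") auto
qed


section \<open>Central approximate identities\<close>

definition class_average :: "('a \<Rightarrow> complex) \<Rightarrow> 'a \<Rightarrow> complex" where
  "class_average g x =
     (if x \<in> topspace T then haar_integral (\<lambda>y. if y \<in> topspace T then g (y \<otimes> x \<otimes> inv y) else 0) else 0)"

lemma Cfun_conj_orbit:
  assumes "g \<in> Cfun T" "x \<in> topspace T"
  shows "(\<lambda>y. if y \<in> topspace T then g (y \<otimes> x \<otimes> inv y) else 0) \<in> Cfun T"
  using assms(2) by (intro Cfun_compose[OF assms(1)] continuous_intros) (auto simp: topspace_eq_carrier)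

lemma Cfun_class_average:
  assumes g: "g \<in> Cfun T"
  shows "class_average g \<in> Cfun T"
proof -
  have "continuous_map (prod_topology T T) euclidean (\<lambda>p. g (snd p \<otimes> fst p \<otimes> inv (snd p)))"
    by (intro continuous_map_Cfun_compose[OF g] continuous_intros continuous_map_fst continuous_map_snd)
  from Cfun_parametric[OF compact topspace_nonempty this haar_integral_Meas]
  show ?thesis unfolding iterated_integral_def class_average_def prod.sel .
qed

lemma class_average_conj:
  assumes g: "g \<in> Cfun T" and z: "z \<in> carrier G" and x: "x \<in> topspace T"
  shows "class_average g (z \<otimes> x \<otimes> inv z) = class_average g x"
proof -
  define k where "k = (\<lambda>y. if y \<in> topspace T then g (y \<otimes> x \<otimes> inv y) else 0)"
  have "(\<lambda>y. if y \<in> topspace T then g (y \<otimes> (z \<otimes> x \<otimes> inv z) \<otimes> inv y) else 0)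
      = (\<lambda>y. if y \<in> topspace T then k (y \<otimes> z) else 0)"
    using z x by (intro ext) (auto simp: k_def topspace_eq_carrier inv_mult_group m_assoc)
  then have "class_average g (z \<otimes> x \<otimes> inv z) = haar_integral (\<lambda>y. if y \<in> topspace T then k (y \<otimes> z) else 0)"
    using z x by (simp add: class_average_def topspace_eq_carrier)
  also have "\<dots> = haar_integral k"
    unfolding k_def by (rule haar_integral_right_invariant[OF z Cfun_conj_orbit[OF g x]])
  also have "\<dots> = class_average g x" using x by (simp add: class_average_def k_def)
  finally show ?thesis .
qed

lemma haar_integral_class_average:
  assumes g: "g \<in> Cfun T"
  shows "haar_integral (class_average g) = haar_integral g"
proof -
  have F: "continuous_map (prod_topology T T) euclidean (\<lambda>p. g (snd p \<otimes> fst p \<otimes> inv (snd p)))"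
    by (intro continuous_map_Cfun_compose[OF g] continuous_intros continuous_map_fst continuous_map_snd)
  have "haar_integral (class_average g)
      = haar_integral (\<lambda>y. if y \<in> topspace T
          then haar_integral (\<lambda>x. if x \<in> topspace T then g (y \<otimes> x \<otimes> inv y) else 0) else 0)"
    using iterated_integral_swap[OF compact Hausdorff topspace_nonempty compact topspace_nonempty F haar_integral_Meas haar_integral_Meas]
    unfolding iterated_integral_def class_average_def prod.sel .
  also have "\<dots> = haar_integral (\<lambda>y. if y \<in> topspace T then haar_integral g else 0)"
    using haar_integral_conj_invariant g by (simp add: conj_invariant_def topspace_eq_carrier cong: if_cong)
  finally show ?thesis by (simp add: haar_integral_const)
qed

lemma class_average_real_nonneg:
  assumes g: "g \<in> Cfun T" and nonneg: "\<And>x. x \<in> topspace T \<Longrightarrow> Im (g x) = 0 \<and> Re (g x) \<ge> 0"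
    and x: "x \<in> topspace T"
  shows "Im (class_average g x) = 0 \<and> Re (class_average g x) \<ge> 0"
  using haar_integral_real_nonneg[OF Cfun_conj_orbit[OF g x]] x nonneg
  by (auto simp: class_average_def topspace_eq_carrier)

lemma class_average_support:
  assumes g: "\<And>x. x \<in> topspace T \<Longrightarrow> x \<notin> W \<Longrightarrow> g x = 0"
    and W: "\<And>x y. x \<in> W \<Longrightarrow> y \<in> carrier G \<Longrightarrow> y \<otimes> x \<otimes> inv y \<in> V"
    and x: "x \<in> topspace T" "class_average g x \<noteq> 0"
  shows "x \<in> V"
proof (rule ccontr)
  assume "x \<notin> V"
  then have "y \<otimes> x \<otimes> inv y \<notin> W" if "y \<in> carrier G" for y
    using W[of "y \<otimes> x \<otimes> inv y" "inv y"] x(1) that by (auto simp: topspace_eq_carrier m_assoc)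
  then have "(\<lambda>y. if y \<in> topspace T then g (y \<otimes> x \<otimes> inv y) else 0) = (\<lambda>y. 0)"
    using g x(1) by (auto simp: topspace_eq_carrier)
  then show False using x by (simp add: class_average_def Meas_zero[OF haar_integral_Meas])
qed

lemma conj_invariant_nbhd:
  assumes V: "openin T V" "\<one> \<in> V"
  obtains W where "openin T W" "\<one> \<in> W" "\<And>x y. x \<in> W \<Longrightarrow> y \<in> carrier G \<Longrightarrow> y \<otimes> x \<otimes> inv y \<in> V"
proof -
  have op: "openin T2 {p \<in> topspace T2. snd p \<otimes> fst p \<otimes> inv (snd p) \<in> V}"
    by (intro openin_continuous_map_preimage[OF _ V(1)] continuous_intros continuous_map_fst continuous_map_snd)
  have sub: "{\<one>} \<times> topspace T \<subseteq> {p \<in> topspace T2. snd p \<otimes> fst p \<otimes> inv (snd p) \<in> V}"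
    using V by (auto simp: topspace_eq_carrier)
  have "compactin T (topspace T)" using compact by (simp add: compact_space_def)
  then obtain U V' where UV: "openin T U" "\<one> \<in> U" "topspace T \<subseteq> V'"
      "U \<times> V' \<subseteq> {p \<in> topspace T2. snd p \<otimes> fst p \<otimes> inv (snd p) \<in> V}"
    using tube_lemma_right[OF op _ _ sub] by (auto simp: topspace_eq_carrier)
  show ?thesis
  proof (rule that[OF UV(1,2)])
    fix x y assume "x \<in> U" "y \<in> carrier G"
    then have "(x, y) \<in> U \<times> V'" using UV(3) by (auto simp: topspace_eq_carrier)
    then show "y \<otimes> x \<otimes> inv y \<in> V" using UV(4) by auto
  qed
qed

definition central_bump :: "('a \<Rightarrow> complex) \<Rightarrow> 'a set \<Rightarrow> bool" where
  "central_bump f V \<longleftrightarrow> f \<in> Cfun T \<and> (\<forall>x\<in>topspace T. Im (f x) = 0 \<and> Re (f x) \<ge> 0) \<and>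
     (\<forall>x\<in>topspace T. f x \<noteq> 0 \<longrightarrow> x \<in> V) \<and> haar_integral f = 1 \<and>
     (\<forall>y\<in>carrier G. \<forall>x\<in>topspace T. f (y \<otimes> x \<otimes> inv y) = f x)"

lemma central_bump_exists:
  assumes V: "openin T V" "\<one> \<in> V"
  obtains f where "central_bump f V"
proof -
  obtain W where W: "openin T W" "\<one> \<in> W" "\<And>x y. x \<in> W \<Longrightarrow> y \<in> carrier G \<Longrightarrow> y \<otimes> x \<otimes> inv y \<in> V"
    using conj_invariant_nbhd[OF V] by blast
  obtain h where h: "continuous_map T euclideanreal h" "\<And>y. y \<in> topspace T \<Longrightarrow> 0 \<le> h y \<and> h y \<le> 1"
      "h \<one> = 1" "\<And>y. y \<in> topspace T \<Longrightarrow> y \<notin> W \<Longrightarrow> h y = 0"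
    using compact_Hausdorff_Urysohn_point[OF compact Hausdorff W(1,2)] by auto
  define g where "g = (\<lambda>x. if x \<in> topspace T then complex_of_real (h x) else 0)"
  have g: "g \<in> Cfun T" unfolding g_def by (intro Cfun_extend_zero continuous_map_of_real h(1))
  have g_nonneg: "Im (g x) = 0 \<and> Re (g x) \<ge> 0" if "x \<in> topspace T" for x
    using h(2) that by (simp add: g_def)
  define r where "r = Re (haar_integral g)"
  have r: "r > 0"
    unfolding r_def using h(3) by (intro haar_integral_pos[OF g g_nonneg, of \<one>]) (auto simp: g_def topspace_eq_carrier)
  have Ig: "haar_integral g = of_real r"
    using haar_integral_real_nonneg[OF g g_nonneg] by (simp add: r_def complex_eq_iff)
  define f where "f = (\<lambda>x. of_real (1 / r) * class_average g x)"
  have "central_bump f V"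
    unfolding central_bump_def
  proof (intro conjI ballI impI)
    show "f \<in> Cfun T" unfolding f_def by (rule Cfun_cmult[OF Cfun_class_average[OF g]])
    have "haar_integral f = of_real (1 / r) * haar_integral (class_average g)"
      unfolding f_def by (rule Meas_cmult[OF haar_integral_Meas Cfun_class_average[OF g]])
    then show "haar_integral f = 1"
      using r by (simp add: haar_integral_class_average[OF g] Ig)
    fix x assume x: "x \<in> topspace T"
    show "Im (f x) = 0" "Re (f x) \<ge> 0"
      using class_average_real_nonneg[OF g g_nonneg x] r by (simp_all add: f_def)
    show "f x \<noteq> 0 \<Longrightarrow> x \<in> V"
      using class_average_support[where g = g, OF _ W(3) x] h(4) by (auto simp: f_def g_def)
    fix y assume "y \<in> carrier G"
    then show "f (y \<otimes> x \<otimes> inv y) = f x" using class_average_conj[OF g _ x] by (simp add: f_def)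
  qed
  then show ?thesis by (rule that)
qed


section \<open>Density of the centre of \<open>L\<^sup>1(G)\<close>\<close>

lemma L1_subset_Meas: "L1 T m \<subseteq> Meas T"
proof
  fix \<phi> assume "\<phi> \<in> L1 T m"
  then obtain f where f: "integrable m f" and \<phi>: "\<phi> = (\<lambda>u. if u \<in> Cfun T then (\<integral>x. u x * f x \<partial>m) else 0)"
    by (auto simp: L1_def)
  have bound: "cmod (u x * f x) \<le> supnorm T u * cmod (f x)" if "u \<in> Cfun T" "x \<in> space m" for u x
    using supnorm_upper[OF compact that(1)] that(2) by (simp add: space_haar norm_mult mult_right_mono)
  have int: "integrable m (\<lambda>x. u x * f x)" if u: "u \<in> Cfun T" for u
  proof (rule Bochner_Integration.integrable_bound[OF integrable_mult_right[OF f, of "of_real (supnorm T u)"]])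
    show "(\<lambda>x. u x * f x) \<in> borel_measurable m"
      using u f by (intro borel_measurable_times continuous_map_borel_measurable Cfun_continuous_map
          borel_measurable_integrable)
    show "AE x in m. norm (u x * f x) \<le> norm (complex_of_real (supnorm T u) * f x)"
      using bound[OF u] supnorm_nonneg[OF compact u topspace_nonempty] by (intro AE_I2) (simp add: norm_mult)
  qed
  show "\<phi> \<in> Meas T"
    unfolding Meas_def
  proof (intro CollectI conjI ballI allI impI exI)
    fix u assume u: "u \<in> Cfun T"
    have "cmod (\<phi> u) \<le> (\<integral>x. cmod (u x * f x) \<partial>m)" using u by (simp add: \<phi>)
    also have "\<dots> \<le> (\<integral>x. supnorm T u * cmod (f x) \<partial>m)"
      using int[OF u] f bound[OF u] by (intro Bochner_Integration.integral_mono) auto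
    also have "\<dots> = (\<integral>x. cmod (f x) \<partial>m) * supnorm T u" by simp
    finally show "cmod (\<phi> u) \<le> (\<integral>x. cmod (f x) \<partial>m) * supnorm T u" .
  qed (use int in \<open>simp_all add: \<phi> Cfun_add Cfun_cmult distrib_right mult.assoc\<close>)
qed

definition density_functional :: "('a \<Rightarrow> complex) \<Rightarrow> (('a \<Rightarrow> complex) \<Rightarrow> complex)" where
  "density_functional f = (\<lambda>u. if u \<in> Cfun T then haar_integral (\<lambda>x. u x * f x) else 0)"

lemma density_functional_L1:
  assumes f: "f \<in> Cfun T"
  shows "density_functional f \<in> L1 T m"
proof -
  have "density_functional f = (\<lambda>u. if u \<in> Cfun T then (\<integral>x. u x * f x \<partial>m) else 0)"
    using f by (auto simp: density_functional_def haar_integral_apply Cfun_mult)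
  then show ?thesis unfolding L1_def using Cfun_integrable[OF f] by blast
qed

lemma density_functional_Meas: "f \<in> Cfun T \<Longrightarrow> density_functional f \<in> Meas T"
  using L1_subset_Meas density_functional_L1 by blast

lemma density_functional_translate:
  assumes f: "f \<in> Cfun T" and u: "u \<in> Cfun T" and s: "s \<in> topspace T"
  shows "density_functional f (\<lambda>t. if t \<in> topspace T then u (s \<otimes> t) else 0)
       = haar_integral (\<lambda>t. if t \<in> topspace T then u (s \<otimes> t) * f t else 0)"
proof -
  have "(\<lambda>t. if t \<in> topspace T then u (s \<otimes> t) else 0) \<in> Cfun T"
    using s by (intro Cfun_compose[OF u] continuous_intros) (auto simp: topspace_eq_carrier)
  moreover have "(\<lambda>x. (if x \<in> topspace T then u (s \<otimes> x) else 0) * f x)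
      = (\<lambda>t. if t \<in> topspace T then u (s \<otimes> t) * f t else 0)"
    by auto
  ultimately show ?thesis by (simp add: density_functional_def)
qed

lemma density_functional_translate_density:
  assumes f: "f \<in> Cfun T" and u: "u \<in> Cfun T" and s: "s \<in> topspace T"
  shows "density_functional f (\<lambda>t. if t \<in> topspace T then u (s \<otimes> t) else 0)
       = haar_integral (\<lambda>x. if x \<in> topspace T then u x * f (inv s \<otimes> x) else 0)"
proof -
  define v where "v = (\<lambda>x. if x \<in> topspace T then u x * f (inv s \<otimes> x) else 0)"
  have "v \<in> Cfun T"
    unfolding v_def using s
    by (intro Cfun_extend_zero continuous_map_mult Cfun_continuous_map u continuous_map_Cfun_compose[OF f]
        continuous_intros) (auto simp: topspace_eq_carrier)
  moreover have "(\<lambda>t. if t \<in> topspace T then u (s \<otimes> t) * f t else 0) = (\<lambda>t. if t \<in> topspace T then v (s \<otimes> t) else 0)"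
    using s by (intro ext) (auto simp: v_def topspace_eq_carrier)
  ultimately show ?thesis
    using density_functional_translate[OF f u s] haar_integral_left_invariant[of s v] s
    by (simp add: v_def topspace_eq_carrier)
qed

lemma conv_density_functional:
  assumes \<mu>: "\<mu> \<in> Meas T" and f: "f \<in> Cfun T"
  shows "conv G T \<mu> (density_functional f)
       = density_functional (\<lambda>x. if x \<in> topspace T then \<mu> (\<lambda>s. if s \<in> topspace T then f (inv s \<otimes> x) else 0) else 0)"
    (is "_ = density_functional ?h")
proof
  fix u show "conv G T \<mu> (density_functional f) u = density_functional ?h u"
  proof (cases "u \<in> Cfun T")
    case u: True
    have inner: "density_functional f (\<lambda>t. if t \<in> topspace T then u (s \<otimes> t) else 0)
        = haar_integral (\<lambda>x. if x \<in> topspace T then u x * f (inv s \<otimes> x) else 0)"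
      if "s \<in> topspace T" for s
      by (rule density_functional_translate_density[OF f u that])
    have F: "continuous_map (prod_topology T T) euclidean (\<lambda>p. u (snd p) * f (inv (fst p) \<otimes> snd p))"
      by (intro continuous_map_mult continuous_map_Cfun_compose[OF u] continuous_map_Cfun_compose[OF f]
          continuous_intros continuous_map_fst continuous_map_snd)
    have pull_out: "\<mu> (\<lambda>s. if s \<in> topspace T then u x * f (inv s \<otimes> x) else 0) = u x * ?h x"
      if x: "x \<in> topspace T" for x
    proof -
      have "(\<lambda>s. if s \<in> topspace T then f (inv s \<otimes> x) else 0) \<in> Cfun T"
        using x by (intro Cfun_compose[OF f] continuous_intros) (auto simp: topspace_eq_carrier)
      from Meas_cmult[OF \<mu> this, of "u x"] show ?thesis
        using x by (simp add: if_distrib cong: if_cong)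
    qed
    have "conv G T \<mu> (density_functional f) u
        = \<mu> (\<lambda>s. if s \<in> topspace T then haar_integral (\<lambda>x. if x \<in> topspace T then u x * f (inv s \<otimes> x) else 0) else 0)"
      using u inner by (simp add: conv_def cong: if_cong)
    also have "\<dots> = haar_integral (\<lambda>x. if x \<in> topspace T then \<mu> (\<lambda>s. if s \<in> topspace T then u x * f (inv s \<otimes> x) else 0) else 0)"
      using iterated_integral_swap[OF compact Hausdorff topspace_nonempty compact topspace_nonempty F \<mu> haar_integral_Meas]
      unfolding iterated_integral_def prod.sel .
    also have "\<dots> = haar_integral (\<lambda>x. u x * ?h x)"
      using pull_out by (intro arg_cong[where f = haar_integral] ext) (simp add: Cfun_outside[OF u])
    finally show ?thesis using u by (simp add: density_functional_def)
  qed (simp add: conv_def density_functional_def)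
qed


lemma density_functional_ZM:
  assumes f: "f \<in> Cfun T" and class_fun: "\<And>y x. y \<in> carrier G \<Longrightarrow> x \<in> topspace T \<Longrightarrow> f (y \<otimes> x \<otimes> inv y) = f x"
  shows "density_functional f \<in> ZM G T"
  unfolding ZM_iff_conj_invariant conj_invariant_def
proof (intro conjI ballI density_functional_Meas f)
  fix y u assume y: "y \<in> carrier G" and u: "u \<in> Cfun T"
  define w where "w = (\<lambda>x. u x * f x)"
  have w: "w \<in> Cfun T" unfolding w_def by (rule Cfun_mult[OF u f])
  have "(\<lambda>x. (if x \<in> topspace T then u (y \<otimes> x \<otimes> inv y) else 0) * f x)
      = (\<lambda>x. if x \<in> topspace T then w (y \<otimes> x \<otimes> inv y) else 0)"
    using y class_fun by (auto simp: w_def topspace_eq_carrier)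
  moreover have "(\<lambda>x. if x \<in> topspace T then u (y \<otimes> x \<otimes> inv y) else 0) \<in> Cfun T"
    using y by (intro Cfun_compose[OF u] continuous_intros) auto
  ultimately show "density_functional f (\<lambda>x. if x \<in> topspace T then u (y \<otimes> x \<otimes> inv y) else 0) = density_functional f u"
    using haar_integral_conj_invariant y w u by (simp add: density_functional_def conj_invariant_def w_def)
qed

lemma conj_invariant_conv_class_function:
  assumes ci: "conj_invariant \<mu>" and f: "f \<in> Cfun T"
    and class_fun: "\<And>y x. y \<in> carrier G \<Longrightarrow> x \<in> topspace T \<Longrightarrow> f (y \<otimes> x \<otimes> inv y) = f x"
    and z: "z \<in> carrier G" and x: "x \<in> topspace T"
  shows "\<mu> (\<lambda>s. if s \<in> topspace T then f (inv s \<otimes> (z \<otimes> x \<otimes> inv z)) else 0)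
       = \<mu> (\<lambda>s. if s \<in> topspace T then f (inv s \<otimes> x) else 0)"
proof -
  define k where "k = (\<lambda>s. if s \<in> topspace T then f (inv s \<otimes> x) else 0)"
  have k: "k \<in> Cfun T" unfolding k_def using x by (intro Cfun_compose[OF f] continuous_intros) auto
  have "f (inv s \<otimes> (z \<otimes> x \<otimes> inv z)) = k (inv z \<otimes> s \<otimes> inv (inv z))" if s: "s \<in> carrier G" for s
  proof -
    have "f (inv s \<otimes> (z \<otimes> x \<otimes> inv z)) = f (inv z \<otimes> (inv s \<otimes> (z \<otimes> x \<otimes> inv z)) \<otimes> inv (inv z))"
      using class_fun[of "inv z" "inv s \<otimes> (z \<otimes> x \<otimes> inv z)"] s x z by (simp add: topspace_eq_carrier)
    also have "\<dots> = k (inv z \<otimes> s \<otimes> inv (inv z))"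
      using s x z by (simp add: k_def topspace_eq_carrier inv_mult_group m_assoc)
    finally show ?thesis .
  qed
  then have "(\<lambda>s. if s \<in> topspace T then f (inv s \<otimes> (z \<otimes> x \<otimes> inv z)) else 0)
      = (\<lambda>s. if s \<in> topspace T then k (inv z \<otimes> s \<otimes> inv (inv z)) else 0)"
    by (auto simp: topspace_eq_carrier)
  then show ?thesis using ci z k by (simp add: conj_invariant_def k_def)
qed

lemma conv_central_bump_ZL1:
  assumes \<mu>: "\<mu> \<in> ZM G T" and f: "central_bump f V"
  shows "conv G T \<mu> (density_functional f) \<in> ZL1 G T m"
proof -
  have \<mu>M: "\<mu> \<in> Meas T" and ci: "conj_invariant \<mu>" using \<mu> ZM_iff_conj_invariant by auto
  have fC: "f \<in> Cfun T" and class_fun: "\<And>y x. y \<in> carrier G \<Longrightarrow> x \<in> topspace T \<Longrightarrow> f (y \<otimes> x \<otimes> inv y) = f x"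
    using f by (auto simp: central_bump_def)
  define h where "h = (\<lambda>x. if x \<in> topspace T then \<mu> (\<lambda>s. if s \<in> topspace T then f (inv s \<otimes> x) else 0) else 0)"
  have "continuous_map (prod_topology T T) euclidean (\<lambda>p. f (inv (snd p) \<otimes> fst p))"
    by (intro continuous_map_Cfun_compose[OF fC] continuous_intros continuous_map_fst continuous_map_snd)
  from Cfun_parametric[OF compact topspace_nonempty this \<mu>M]
  have h: "h \<in> Cfun T" unfolding h_def prod.sel .
  have "h (y \<otimes> x \<otimes> inv y) = h x" if "y \<in> carrier G" "x \<in> topspace T" for y x
    using conj_invariant_conv_class_function[OF ci fC class_fun that] that by (simp add: h_def topspace_eq_carrier)
  then have "density_functional h \<in> ZM G T" by (rule density_functional_ZM[OF h])
  then show ?thesis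
    using conv_density_functional[OF \<mu>M fC] density_functional_L1[OF h] L1_subset_Meas
    by (auto simp: ZL1_def ZM_def h_def)
qed

lemma central_bump_translate_close:
  assumes f: "central_bump f V" and u: "u \<in> Cfun T" and s: "s \<in> topspace T"
    and close: "\<And>t. t \<in> V \<Longrightarrow> cmod (u (s \<otimes> t) - u s) \<le> e"
  shows "cmod (density_functional f (\<lambda>t. if t \<in> topspace T then u (s \<otimes> t) else 0) - u s) \<le> e"
proof -
  have fC: "f \<in> Cfun T" and f_real: "\<And>x. x \<in> topspace T \<Longrightarrow> Im (f x) = 0 \<and> Re (f x) \<ge> 0"
    and f_supp: "\<And>x. x \<in> topspace T \<Longrightarrow> f x \<noteq> 0 \<Longrightarrow> x \<in> V" and f1: "haar_integral f = 1"
    using f by (auto simp: central_bump_def)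
  define g where "g = (\<lambda>t. if t \<in> topspace T then (u (s \<otimes> t) - u s) * f t else 0)"
  have gC: "g \<in> Cfun T"
    unfolding g_def using s
    by (intro Cfun_extend_zero continuous_map_mult continuous_map_diff Cfun_continuous_map fC
        continuous_map_Cfun_compose[OF u] continuous_intros) (auto simp: topspace_eq_carrier)
  have a1: "(\<lambda>t. if t \<in> topspace T then u (s \<otimes> t) * f t else 0) \<in> Cfun T"
    using s by (intro Cfun_extend_zero continuous_map_mult Cfun_continuous_map fC
        continuous_map_Cfun_compose[OF u] continuous_intros) (auto simp: topspace_eq_carrier)
  have "u s = haar_integral (\<lambda>t. u s * f t)" using Meas_cmult[OF haar_integral_Meas fC] f1 by simp
  moreover have "g = (\<lambda>t. (if t \<in> topspace T then u (s \<otimes> t) * f t else 0) - u s * f t)"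
    using fC by (auto simp: g_def Cfun_outside algebra_simps)
  ultimately have "density_functional f (\<lambda>t. if t \<in> topspace T then u (s \<otimes> t) else 0) - u s = integral\<^sup>L m g"
    using density_functional_translate[OF fC u s] Meas_diff[OF haar_integral_Meas a1 Cfun_cmult[OF fC]]
      haar_integral_apply[OF gC] by simp
  also have "cmod \<dots> \<le> (\<integral>t. e * Re (f t) \<partial>m)"
  proof (rule order_trans[OF integral_norm_bound Bochner_Integration.integral_mono])
    show "integrable m (\<lambda>t. cmod (g t))" using Cfun_integrable[OF gC] by simp
    show "integrable m (\<lambda>t. e * Re (f t))" using Cfun_integrable[OF fC] by simp
    fix t assume "t \<in> space m"
    then have t: "t \<in> topspace T" by (simp add: space_haar)
    have "cmod (g t) \<le> e * cmod (f t)"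
    proof (cases "f t = 0")
      case False
      then show ?thesis using close[OF f_supp[OF t False]] t by (simp add: g_def norm_mult mult_right_mono)
    qed (simp add: g_def)
    then show "cmod (g t) \<le> e * Re (f t)" using f_real[OF t] by (simp add: cmod_eq_Re)
  qed
  also have "\<dots> = e" using haar_integral_Re[OF fC] f1 by simp
  finally show ?thesis .
qed


lemma Cfun_uniformly_continuous_right:
  assumes u: "u \<in> Cfun T" and \<delta>: "\<delta> > 0"
  obtains W where "openin T W" "\<one> \<in> W"
    "\<And>s t. s \<in> topspace T \<Longrightarrow> t \<in> W \<Longrightarrow> cmod (u (s \<otimes> t) - u s) \<le> \<delta>"
proof -
  have "continuous_map (prod_topology T T) euclidean (\<lambda>p. u (snd p \<otimes> fst p))"
    by (intro continuous_map_Cfun_compose[OF u] continuous_intros continuous_map_fst continuous_map_snd)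
  from compact_tube_uniformly_close[OF compact this _ \<delta>, of \<one>] obtain W where
    "openin T W" "\<one> \<in> W" "\<And>t s. t \<in> W \<Longrightarrow> s \<in> topspace T \<Longrightarrow> cmod (u (s \<otimes> t) - u (s \<otimes> \<one>)) < \<delta>"
    by (auto simp: topspace_eq_carrier)
  then show ?thesis by (intro that) (auto simp: topspace_eq_carrier intro: less_imp_le)
qed

lemma ZM_finite_approx:
  assumes \<mu>: "\<mu> \<in> ZM G T" and J: "finite J" and \<epsilon>: "\<epsilon> > 0"
  shows "\<exists>\<psi>\<in>ZL1 G T m. \<forall>u\<in>J. dist (\<psi> u) (\<mu> u) < \<epsilon>"
proof -
  have \<mu>M: "\<mu> \<in> Meas T" using \<mu> by (simp add: ZM_def)
  obtain B where B: "B \<ge> 0" "\<And>u v e. u \<in> Cfun T \<Longrightarrow> v \<in> Cfun T \<Longrightarrow>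
      (\<And>x. x \<in> topspace T \<Longrightarrow> cmod (u x - v x) \<le> e) \<Longrightarrow> cmod (\<mu> u - \<mu> v) \<le> B * e"
    using Meas_lipschitz[OF \<mu>M compact topspace_nonempty] by blast
  define \<delta> where "\<delta> = \<epsilon> / (B + 1)"
  have \<delta>: "\<delta> > 0" "B * \<delta> < \<epsilon>" using B(1) \<epsilon> by (auto simp: \<delta>_def field_simps)
  have "\<exists>W. openin T W \<and> \<one> \<in> W \<and> (\<forall>t\<in>W. \<forall>s\<in>topspace T. cmod (u (s \<otimes> t) - u s) \<le> \<delta>)"
    if "u \<in> Cfun T" for u
    using Cfun_uniformly_continuous_right[OF that \<delta>(1)] by metis
  then obtain W where W: "\<And>u. u \<in> Cfun T \<Longrightarrow> openin T (W u) \<and> \<one> \<in> W u \<and>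
      (\<forall>t\<in>W u. \<forall>s\<in>topspace T. cmod (u (s \<otimes> t) - u s) \<le> \<delta>)"
    by metis
  define V where "V = (\<Inter>u\<in>J \<inter> Cfun T. W u) \<inter> topspace T"
  have "openin T V" unfolding V_def using W J by (intro openin_INT) auto
  moreover have "\<one> \<in> V" unfolding V_def using W by (auto simp: topspace_eq_carrier)
  ultimately have V: "openin T V" "\<one> \<in> V" by auto
  obtain f where f: "central_bump f V" using central_bump_exists[OF V] .
  have fC: "f \<in> Cfun T" using f by (simp add: central_bump_def)
  show ?thesis
  proof (intro bexI[OF _ conv_central_bump_ZL1[OF \<mu> f]] ballI)
    fix u assume uJ: "u \<in> J"
    show "dist (conv G T \<mu> (density_functional f) u) (\<mu> u) < \<epsilon>"
    proof (cases "u \<in> Cfun T")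
      case u: True
      define Gu where
        "Gu = (\<lambda>s. if s \<in> topspace T then density_functional f (\<lambda>t. if t \<in> topspace T then u (s \<otimes> t) else 0) else 0)"
      have "cmod (\<mu> Gu - \<mu> u) \<le> B * \<delta>"
      proof (rule B(2)[OF _ u])
        show "Gu \<in> Cfun T" unfolding Gu_def by (rule Cfun_conv_inner[OF u density_functional_Meas[OF fC]])
        fix s assume s: "s \<in> topspace T"
        have "cmod (u (s \<otimes> t) - u s) \<le> \<delta>" if "t \<in> V" for t
          using W[OF u] uJ u s that by (auto simp: V_def)
        then show "cmod (Gu s - u s) \<le> \<delta>"
          using central_bump_translate_close[OF f u s] s by (simp add: Gu_def)
      qed
      moreover have "conv G T \<mu> (density_functional f) u = \<mu> Gu" by (simp add: conv_def u Gu_def)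
      ultimately show ?thesis using \<delta> by (simp add: dist_norm)
    qed (use \<epsilon> Meas_outside[OF \<mu>M] in \<open>simp add: conv_def\<close>)
  qed
qed

lemma ZM_subset_closure_ZL1: "ZM G T \<subseteq> closure (ZL1 G T m)"
  by (intro subsetI closure_fun_finite_approx ZM_finite_approx)

end

theorem proposition1p4:
  fixes G :: "('a, 'b) monoid_scheme" and T :: "'a topology" and m :: "'a measure"
  assumes "compact_group G T"
    and "haar_measure G T m"
  shows "(closedin (subtopology euclidean (Meas T)) (ZM G T)) \<and>
         ZM G T \<subseteq> closure (ZL1 G T m) \<and>
         mtilde G T ` ZM (G \<times>\<times> G) (prod_topology T T) = ZM G T \<and>
         (\<forall>\<mu>\<in>ZM (G \<times>\<times> G) (prod_topology T T). \<forall>\<nu>\<in>ZM (G \<times>\<times> G) (prod_topology T T).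
           mtilde G T (conv (G \<times>\<times> G) (prod_topology T T) \<mu> \<nu>)
             = conv G T (mtilde G T \<mu>) (mtilde G T \<nu>)) \<and>
         (\<forall>\<mu>\<in>ZM (G \<times>\<times> G) (prod_topology T T). \<forall>\<nu>\<in>ZM (G \<times>\<times> G) (prod_topology T T). \<forall>a b.
           mtilde G T (\<lambda>u. a * \<mu> u + b * \<nu> u)
             = (\<lambda>u. a * mtilde G T \<mu> u + b * mtilde G T \<nu> u))"
proof -
  interpret haar_grp G T m
    using assms by (simp add: haar_grp_def haar_grp_axioms_def compact_grp_def)
  show ?thesis
  proof (intro conjI ballI allI)
    show "mtilde G T ` ZM (G \<times>\<times> G) T2 = ZM G T"
      using mtilde_ZM ZM_subset_mtilde_image by blast
  qed (simp_all add: ZM_closed ZM_subset_closure_ZL1 mtilde_conv mtilde_linear)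
qed

end
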